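(* Fix a risk level $\alpha\in(0,1)$ and a transient MDP with a sink state as in the context. Let $\delta>0$ and let $\beta_0>0$ (with $\beta_0<-\log(\alpha)/\delta$) be chosen such that $g^\star_\infty(0)-g^\star_\infty(\beta_0)\le\delta$. Let \[ (\pi^\star,\beta^\star)\in\arg\max_{(\pi,\beta)\in\Pi_{\mathrm{SD}}\times\mathcal B(\beta_0,\delta)}h_\infty(\pi,\beta). \] Then the limits below exist and \[ \lim_{t\to\infty}\mathrm{EVaR}^{\pi^\star,\mu}_\alpha\Big[\sum_{k=0}^t r(\tilde s_k,\tilde a_k,\tilde s_{k+1})\Big]\;\ge\;\sup_{\pi\in\Pi_{\mathrm{HR}}}\lim_{t\to\infty}\sup_{\beta>0}h_t(\pi,\beta)-\delta. \]
   Context: MDP: states $\bar{\mathcal S}=\{1,\dots,S,S+1\}$, $e:=S+1$ a sink state, $\mathcal S=\{1,\dots,S\}$; finite actions; transitions $p(s,a,s')$, real rewards $r(s,a,s')$ of arbitrary sign; $p(e,a,e)=1$, $r(e,a,e)=0$; initial distribution $\mu$ on $\mathcal S$ with $\mu>0$. $\Pi_{\mathrm{HR}}$: history-dependent randomized policies; $\Pi_{\mathrm{SD}}$: stationary deterministic policies. Transience: for every $\pi\in\Pi_{\mathrm{SD}}$, $\sum_{t\ge0}\mathbb P^{\pi,s}[\tilde s_t=s']<\infty$ for all $s,s'\in\mathcal S$. $\mathrm{ERM}_\beta[\tilde x]=-\beta^{-1}\log\mathbb E e^{-\beta\tilde x}$ for $\beta>0$, $\mathrm{ERM}_0=\mathbb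 E$. $\mathrm{EVaR}_\alpha[\tilde x]=\sup_{\beta>0}\big(\mathrm{ERM}_\beta[\tilde x]+\beta^{-1}\log\alpha\big)$. $g_t(\pi,\beta)=\mathrm{ERM}^{\pi,\mu}_\beta[\sum_{k=0}^t r(\tilde s_k,\tilde a_k,\tilde s_{k+1})]$, $g^\star_t(\beta)=\sup_{\pi\in\Pi_{\mathrm{HR}}}g_t(\pi,\beta)$, $g_\infty(\pi,\beta)=\liminf_t g_t(\pi,\beta)$, $g^\star_\infty(\beta)=\liminf_t g^\star_t(\beta)$ (for $\beta=0$ defined via expectation). $h_t(\pi,\beta)=g_t(\pi,\beta)+\beta^{-1}\log\alpha$, $h_\infty(\pi,\beta)=g_\infty(\pi,\beta)+\beta^{-1}\log\alpha$. The finite set $\mathcal B(\beta_0,\delta)=\{\beta_0,\beta_1,\dots,\beta_K\}$ with $0<\beta_0<\beta_1<\dots<\beta_K$ is given by $\beta_{k+1}=\frac{\beta_k\log\alpha}{\beta_k\delta+\log\alpha}$ for the intermediate indices (i.e. $\beta_{k+1}^{-1}=\beta_k^{-1}+\delta/\log\alpha$), continued while the values stay below $-\log(\alpha)/\delta$, and $\beta_K=-\log(\alpha)/\delta$. *)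

theory Defs
  imports "HOL-Analysis.Analysis"
begin

text \<open>
  Finite MDP with states 1..S+1 (state S+1 is the sink e), actions drawn from a
  finite type 'a, transition function p, reward function r.
  A history-dependent randomized policy maps the past state-action pairs
  (s_0,a_0),...,(s_{k-1},a_{k-1}) and the current state s_k to a distribution over
  actions.  All quantities at finite horizon are computed as finite sums over
  finite trajectories s_0,a_0,...,s_{n-1},a_{n-1},s_n.
\<close>

type_synonym 'a policy = "(nat \<times> 'a) list \<Rightarrow> nat \<Rightarrow> 'a \<Rightarrow> real"

definition HR_policies :: "('a::finite) policy set" where
  "HR_policies = {\<pi>. \<forall>h s. (\<forall>a. 0 \<le> \<pi> h s a) \<and> (\<Sum>a\<in>UNIV. \<pi> h s a) = 1}"

definition sd_policy :: "(nat \<Rightarrow> 'a) \<Rightarrow> 'a policy" where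
  "sd_policy d = (\<lambda>h s a. if a = d s then 1 else 0)"

definition paths :: "nat \<Rightarrow> nat \<Rightarrow> (nat list \<times> ('a::finite) list) set" where
  "paths S n = {(ss, as). length ss = Suc n \<and> set ss \<subseteq> {1..Suc S} \<and> length as = n}"

definition path_weight ::
  "(nat \<Rightarrow> 'a \<Rightarrow> nat \<Rightarrow> real) \<Rightarrow> 'a policy \<Rightarrow> (nat \<Rightarrow> real) \<Rightarrow> nat
     \<Rightarrow> nat list \<Rightarrow> 'a list \<Rightarrow> real" where
  "path_weight p \<pi> \<nu> n ss as =
     \<nu> (ss ! 0) * (\<Prod>k<n. \<pi> (zip (take k ss) (take k as)) (ss ! k) (as ! k)
                          * p (ss ! k) (as ! k) (ss ! Suc k))"

definition expect ::
  "(nat \<Rightarrow> 'a::finite \<Rightarrow> nat \<Rightarrow> real) \<Rightarrow> nat \<Rightarrow> 'a policy \<Rightarrow> (nat \<Rightarrow> real) \<Rightarrow> nat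
     \<Rightarrow> (nat list \<Rightarrow> 'a list \<Rightarrow> real) \<Rightarrow> real" where
  "expect p S \<pi> \<nu> n f = (\<Sum>(ss, as)\<in>paths S n. path_weight p \<pi> \<nu> n ss as * f ss as)"

definition erm ::
  "(nat \<Rightarrow> 'a::finite \<Rightarrow> nat \<Rightarrow> real) \<Rightarrow> nat \<Rightarrow> 'a policy \<Rightarrow> (nat \<Rightarrow> real) \<Rightarrow> nat
     \<Rightarrow> real \<Rightarrow> (nat list \<Rightarrow> 'a list \<Rightarrow> real) \<Rightarrow> real" where
  "erm p S \<pi> \<nu> n \<beta> f =
     (if \<beta> = 0 then expect p S \<pi> \<nu> n f
      else - (1 / \<beta>) * ln (expect p S \<pi> \<nu> n (\<lambda>ss as. exp (- \<beta> * f ss as))))"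

definition evar ::
  "(nat \<Rightarrow> 'a::finite \<Rightarrow> nat \<Rightarrow> real) \<Rightarrow> nat \<Rightarrow> 'a policy \<Rightarrow> (nat \<Rightarrow> real) \<Rightarrow> nat
     \<Rightarrow> real \<Rightarrow> (nat list \<Rightarrow> 'a list \<Rightarrow> real) \<Rightarrow> real" where
  "evar p S \<pi> \<nu> n \<alpha> f = Sup ((\<lambda>\<beta>. erm p S \<pi> \<nu> n \<beta> f + ln \<alpha> / \<beta>) ` {0<..})"

definition ret :: "(nat \<Rightarrow> 'a \<Rightarrow> nat \<Rightarrow> real) \<Rightarrow> nat \<Rightarrow> nat list \<Rightarrow> 'a list \<Rightarrow> real" where
  "ret r n ss as = (\<Sum>k<n. r (ss ! k) (as ! k) (ss ! Suc k))"

text \<open>g_t(\<pi>,\<beta>) = ERM_\<beta>[sum_{k=0}^t r(s_k,a_k,s_{k+1})] (t+1 transitions).\<close>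
definition g_t ::
  "(nat \<Rightarrow> 'a::finite \<Rightarrow> nat \<Rightarrow> real) \<Rightarrow> (nat \<Rightarrow> 'a \<Rightarrow> nat \<Rightarrow> real) \<Rightarrow> nat \<Rightarrow> (nat \<Rightarrow> real)
     \<Rightarrow> 'a policy \<Rightarrow> real \<Rightarrow> nat \<Rightarrow> real" where
  "g_t p r S \<mu> \<pi> \<beta> t = erm p S \<pi> \<mu> (Suc t) \<beta> (ret r (Suc t))"

definition gstar_t ::
  "(nat \<Rightarrow> 'a::finite \<Rightarrow> nat \<Rightarrow> real) \<Rightarrow> (nat \<Rightarrow> 'a \<Rightarrow> nat \<Rightarrow> real) \<Rightarrow> nat \<Rightarrow> (nat \<Rightarrow> real)
     \<Rightarrow> real \<Rightarrow> nat \<Rightarrow> real" where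
  "gstar_t p r S \<mu> \<beta> t = Sup ((\<lambda>\<pi>. g_t p r S \<mu> \<pi> \<beta> t) ` HR_policies)"

definition g_inf ::
  "(nat \<Rightarrow> 'a::finite \<Rightarrow> nat \<Rightarrow> real) \<Rightarrow> (nat \<Rightarrow> 'a \<Rightarrow> nat \<Rightarrow> real) \<Rightarrow> nat \<Rightarrow> (nat \<Rightarrow> real)
     \<Rightarrow> 'a policy \<Rightarrow> real \<Rightarrow> ereal" where
  "g_inf p r S \<mu> \<pi> \<beta> = liminf (\<lambda>t. ereal (g_t p r S \<mu> \<pi> \<beta> t))"

definition gstar_inf ::
  "(nat \<Rightarrow> 'a::finite \<Rightarrow> nat \<Rightarrow> real) \<Rightarrow> (nat \<Rightarrow> 'a \<Rightarrow> nat \<Rightarrow> real) \<Rightarrow> nat \<Rightarrow> (nat \<Rightarrow> real)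
     \<Rightarrow> real \<Rightarrow> ereal" where
  "gstar_inf p r S \<mu> \<beta> = liminf (\<lambda>t. ereal (gstar_t p r S \<mu> \<beta> t))"

definition h_t ::
  "(nat \<Rightarrow> 'a::finite \<Rightarrow> nat \<Rightarrow> real) \<Rightarrow> (nat \<Rightarrow> 'a \<Rightarrow> nat \<Rightarrow> real) \<Rightarrow> nat \<Rightarrow> (nat \<Rightarrow> real)
     \<Rightarrow> real \<Rightarrow> 'a policy \<Rightarrow> real \<Rightarrow> nat \<Rightarrow> real" where
  "h_t p r S \<mu> \<alpha> \<pi> \<beta> t = g_t p r S \<mu> \<pi> \<beta> t + ln \<alpha> / \<beta>"

definition h_inf ::
  "(nat \<Rightarrow> 'a::finite \<Rightarrow> nat \<Rightarrow> real) \<Rightarrow> (nat \<Rightarrow> 'a \<Rightarrow> nat \<Rightarrow> real) \<Rightarrow> nat \<Rightarrow> (nat \<Rightarrow> real)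
     \<Rightarrow> real \<Rightarrow> 'a policy \<Rightarrow> real \<Rightarrow> ereal" where
  "h_inf p r S \<mu> \<alpha> \<pi> \<beta> = g_inf p r S \<mu> \<pi> \<beta> + ereal (ln \<alpha> / \<beta>)"

definition beta_grid :: "real \<Rightarrow> real \<Rightarrow> real \<Rightarrow> real set" where
  "beta_grid \<alpha> \<beta>0 \<delta> =
     {\<beta>. \<exists>k::nat. 0 < 1 / \<beta>0 + real k * \<delta> / ln \<alpha>
               \<and> \<beta> = 1 / (1 / \<beta>0 + real k * \<delta> / ln \<alpha>) \<and> \<beta> < - ln \<alpha> / \<delta>}
     \<union> {- ln \<alpha> / \<delta>}"

text \<open>Transience: for every SD policy, expected visits to each non-sink state are finite.\<close>
definition transient :: "(nat \<Rightarrow> 'a::finite \<Rightarrow> nat \<Rightarrow> real) \<Rightarrow> nat \<Rightarrow> bool" where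
  "transient p S \<longleftrightarrow>
     (\<forall>d::nat \<Rightarrow> 'a. \<forall>s\<in>{1..S}. \<forall>s'\<in>{1..S}.
        summable (\<lambda>t. expect p S (sd_policy d) (\<lambda>x. if x = s then 1 else 0) t
                        (\<lambda>ss as. if last ss = s' then 1 else 0)))"

end

(*
  For beta > 0 write ERM_beta of the return through the exponential moment
  E[exp (-beta R_n)].  It obeys a linear recursion in n whose maximum principle drives the
  whole argument.  Transience forces every history-dependent policy to reach the sink within
  K steps with probability at least c > 0, uniformly; hence the mass left on transient states
  decays, the mean return converges, and the exponential moment either converges or tends
  to infinity, so each ERM_beta of the return converges in the extended reals.  Value
  iteration for the minimal exponential moment produces, via its lower envelope, a
  supersolution of the Bellman equation whose greedy stationary deterministic policy is
  asymptotically optimal among all history-dependent policies.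

  Since ERM_beta is antitone in beta and the reciprocals of consecutive grid points differ by
  delta / (-log alpha), for every beta > 0 the objective ERM_beta + log alpha / beta is within
  delta of its value at a grid point, or is bounded by ERM_0 + log alpha / beta_0; the gap
  hypothesis bounds the latter by the grid objective plus delta.
*)
theory Submission
  imports Defs
begin

section \<open>Expectations over finite paths\<close>

(* keep sums over the state space {1..Suc S} from splitting off the sink *)
declare sum.cl_ivl_Suc[simp del] prod.cl_ivl_Suc[simp del]

definition dirac :: "nat \<Rightarrow> nat \<Rightarrow> real" where
  "dirac s = (\<lambda>x. if x = s then 1 else 0)"

definition shift_policy :: "'a policy \<Rightarrow> nat \<Rightarrow> 'a \<Rightarrow> 'a policy" where
  "shift_policy \<pi> s a = (\<lambda>h. \<pi> ((s, a) # h))"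

lemma sum_dirac: "finite A \<Longrightarrow> s \<in> A \<Longrightarrow> (\<Sum>x\<in>A. dirac s x * f x) = f s"
  by (simp add: dirac_def if_distrib[where f = "\<lambda>c. c * _"] cong: if_cong)

lemma finite_paths: "finite (paths S n :: (nat list \<times> 'a::finite list) set)"
proof (rule finite_subset)
  show "paths S n \<subseteq> {ss. set ss \<subseteq> {1..Suc S} \<and> length ss = Suc n} \<times> {as::'a list. set as \<subseteq> UNIV \<and> length as = n}"
    by (auto simp: paths_def)
  show "finite ({ss. set ss \<subseteq> {1..Suc S} \<and> length ss = Suc n} \<times> {as::'a list. set as \<subseteq> UNIV \<and> length as = n})"
    by (intro finite_cartesian_product finite_lists_length_eq) auto
qed

lemma paths_nth: "(ss, as) \<in> paths S n \<Longrightarrow> k \<le> n \<Longrightarrow> ss ! k \<in> {1..Suc S}"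
  unfolding paths_def by (metis (mono_tags, lifting) case_prod_conv le_imp_less_Suc mem_Collect_eq nth_mem subsetD)

lemma paths_last: "(ss, as) \<in> paths S n \<Longrightarrow> last ss \<in> {1..Suc S}"
proof -
  assume "(ss, as) \<in> paths S n"
  then have "ss \<noteq> []" "set ss \<subseteq> {1..Suc S}" by (auto simp: paths_def)
  then show ?thesis using last_in_set by blast
qed

lemma paths_0: "paths S 0 = (\<lambda>s. ([s], [])) ` {1..Suc S}"
proof (rule set_eqI, rule iffI)
  fix x assume "x \<in> paths S 0"
  then obtain s where "x = ([s], [])" "s \<in> {1..Suc S}"
    by (auto simp: paths_def length_Suc_conv)
  then show "x \<in> (\<lambda>s. ([s], [])) ` {1..Suc S}" by auto
qed (auto simp: paths_def)

lemma paths_Suc: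
  "paths S (Suc n) = (\<lambda>(s, a, ss, as). (s # ss, a # as)) ` ({1..Suc S} \<times> UNIV \<times> paths S n)"
proof (rule set_eqI, rule iffI)
  fix x assume "x \<in> paths S (Suc n)"
  then obtain s ss a as where "x = (s # ss, a # as)" "(s, a, ss, as) \<in> {1..Suc S} \<times> UNIV \<times> paths S n"
    by (auto simp: paths_def length_Suc_conv)
  then show "x \<in> (\<lambda>(s, a, ss, as). (s # ss, a # as)) ` ({1..Suc S} \<times> UNIV \<times> paths S n)"
    by (auto intro!: image_eqI[where x = "(s, a, ss, as)"])
qed (auto simp: paths_def)

lemma path_weight_Cons:
  "path_weight p \<pi> \<nu> (Suc n) (s # ss) (a # as) =
     \<nu> s * \<pi> [] s a * path_weight p (shift_policy \<pi> s a) (p s a) n ss as"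
  unfolding path_weight_def shift_policy_def
  by (simp add: prod.lessThan_Suc_shift del: prod.lessThan_Suc)

lemma expect_0: "expect p S \<pi> \<nu> 0 f = (\<Sum>s\<in>{1..Suc S}. \<nu> s * f [s] [])"
  unfolding expect_def paths_0
  by (subst sum.reindex) (auto simp: inj_on_def path_weight_def)

lemma expect_Suc:
  "expect p S \<pi> \<nu> (Suc n) f = (\<Sum>s\<in>{1..Suc S}. \<Sum>a\<in>UNIV. \<nu> s * \<pi> [] s a *
      expect p S (shift_policy \<pi> s a) (p s a) n (\<lambda>ss as. f (s # ss) (a # as)))"
proof -
  have "expect p S \<pi> \<nu> (Suc n) f =
      (\<Sum>(s, a, ss, as)\<in>{1..Suc S} \<times> UNIV \<times> paths S n.
         path_weight p \<pi> \<nu> (Suc n) (s # ss) (a # as) * f (s # ss) (a # as))"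
    unfolding expect_def paths_Suc
    by (subst sum.reindex) (auto simp: inj_on_def case_prod_beta)
  then show ?thesis
    unfolding expect_def path_weight_Cons
    by (simp add: sum.cartesian_product sum_distrib_left case_prod_beta mult.assoc)
qed

lemma expect_cong:
  "(\<And>ss as. (ss, as) \<in> paths S n \<Longrightarrow> f ss as = g ss as) \<Longrightarrow>
     expect p S \<pi> \<nu> n f = expect p S \<pi> \<nu> n g"
  unfolding expect_def by (intro sum.cong) auto

lemma expect_add:
  "expect p S \<pi> \<nu> n (\<lambda>ss as. f ss as + g ss as) = expect p S \<pi> \<nu> n f + expect p S \<pi> \<nu> n g"
  unfolding expect_def by (simp add: sum.distrib case_prod_beta distrib_left)

lemma expect_sum:
  "finite I \<Longrightarrow>
     expect p S \<pi> \<nu> n (\<lambda>ss as. \<Sum>i\<in>I. f i ss as) = (\<Sum>i\<in>I. expect p S \<pi> \<nu> n (f i))"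
  unfolding expect_def by (simp add: sum_distrib_left case_prod_beta sum.swap[where A = I])

lemma expect_zero: "expect p S \<pi> \<nu> n (\<lambda>ss as. 0) = 0"
  unfolding expect_def by simp

lemma expect_condition_first_state:
  "expect p S \<pi> \<nu> n (\<lambda>ss as. g (ss ! 0) * h ss as) =
     (\<Sum>s\<in>{1..Suc S}. \<nu> s * g s * expect p S \<pi> (dirac s) n h)"
proof -
  have "path_weight p \<pi> \<nu> n ss as * (g (ss ! 0) * h ss as) =
      (\<Sum>s\<in>{1..Suc S}. \<nu> s * g s * (path_weight p \<pi> (dirac s) n ss as * h ss as))"
    if "(ss, as) \<in> paths S n" for ss as
  proof -
    have "(\<Sum>s\<in>{1..Suc S}. \<nu> s * g s * (path_weight p \<pi> (dirac s) n ss as * h ss as)) =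
        (\<Sum>s\<in>{1..Suc S}. if s = ss ! 0 then \<nu> s * g s * (path_weight p \<pi> (dirac s) n ss as * h ss as) else 0)"
      by (intro sum.cong) (auto simp: path_weight_def dirac_def)
    also have "\<dots> = path_weight p \<pi> \<nu> n ss as * (g (ss ! 0) * h ss as)"
      using paths_nth[OF that, of 0] by (simp add: path_weight_def dirac_def)
    finally show ?thesis by simp
  qed
  then have "expect p S \<pi> \<nu> n (\<lambda>ss as. g (ss ! 0) * h ss as) =
      (\<Sum>(ss, as)\<in>paths S n. \<Sum>s\<in>{1..Suc S}.
         \<nu> s * g s * (path_weight p \<pi> (dirac s) n ss as * h ss as))"
    unfolding expect_def by (intro sum.cong) auto
  also have "\<dots> = (\<Sum>s\<in>{1..Suc S}. \<nu> s * g s * expect p S \<pi> (dirac s) n h)"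
    unfolding expect_def by (simp only: sum_distrib_left split_beta') (rule sum.swap)
  finally show ?thesis .
qed

lemma expect_mixture:
  "expect p S \<pi> \<nu> n h = (\<Sum>s\<in>{1..Suc S}. \<nu> s * expect p S \<pi> (dirac s) n h)"
  using expect_condition_first_state[of p S \<pi> \<nu> n "\<lambda>_. 1" h] by simp

lemma expect_dirac_Suc:
  "s \<in> {1..Suc S} \<Longrightarrow> expect p S \<pi> (dirac s) (Suc n) f =
     (\<Sum>a\<in>UNIV. \<pi> [] s a *
        expect p S (shift_policy \<pi> s a) (p s a) n (\<lambda>ss as. f (s # ss) (a # as)))"
  unfolding expect_Suc by (simp add: mult.assoc sum_distrib_left[symmetric] sum_dirac)

lemma ret_0: "ret r 0 ss as = 0"
  unfolding ret_def by simp

lemma ret_Cons: "ret r (Suc n) (s # ss) (a # as) = r s a (ss ! 0) + ret r n ss as"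
  unfolding ret_def by (simp add: sum.lessThan_Suc_shift del: sum.lessThan_Suc)

lemma HR_policies_nonneg: "\<pi> \<in> HR_policies \<Longrightarrow> 0 \<le> \<pi> h s a"
  unfolding HR_policies_def by auto

lemma HR_policies_sum: "\<pi> \<in> HR_policies \<Longrightarrow> (\<Sum>a\<in>UNIV. \<pi> h s a) = 1"
  unfolding HR_policies_def by auto

lemma shift_policy_HR: "\<pi> \<in> HR_policies \<Longrightarrow> shift_policy \<pi> s a \<in> HR_policies"
  unfolding HR_policies_def shift_policy_def by auto

lemma sd_policy_HR: "sd_policy d \<in> HR_policies"
  unfolding HR_policies_def sd_policy_def by auto

lemma shift_sd_policy: "shift_policy (sd_policy d) s a = sd_policy d"
  unfolding shift_policy_def sd_policy_def by auto

lemma sum_sd_policy: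
  fixes d :: "nat \<Rightarrow> 'a::finite"
  shows "(\<Sum>a\<in>UNIV. sd_policy d h s a * f a) = f (d s)"
proof -
  have "(\<Sum>a\<in>UNIV. sd_policy d h s a * f a) = (\<Sum>a\<in>UNIV. if a = d s then f a else 0)"
    by (intro sum.cong) (auto simp: sd_policy_def)
  then show ?thesis by simp
qed

section \<open>Tilted expectations and the maximum principle\<close>

lemma sum_swap_nested:
  fixes x :: "'b \<Rightarrow> real"
  shows "(\<Sum>j\<in>J. \<Sum>a\<in>A. x a * (\<Sum>s\<in>B. w a s * f j a s)) =
    (\<Sum>a\<in>A. x a * (\<Sum>s\<in>B. w a s * (\<Sum>j\<in>J. f j a s)))"
proof -
  have "(\<Sum>j\<in>J. \<Sum>a\<in>A. x a * (\<Sum>s\<in>B. w a s * f j a s)) =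
      (\<Sum>j\<in>J. \<Sum>a\<in>A. \<Sum>s\<in>B. x a * w a s * f j a s)"
    by (simp add: sum_distrib_left mult.assoc)
  also have "\<dots> = (\<Sum>a\<in>A. \<Sum>j\<in>J. \<Sum>s\<in>B. x a * w a s * f j a s)"
    by (rule sum.swap)
  also have "\<dots> = (\<Sum>a\<in>A. \<Sum>s\<in>B. \<Sum>j\<in>J. x a * w a s * f j a s)"
    by (simp add: sum.swap[of _ J])
  also have "\<dots> = (\<Sum>a\<in>A. x a * (\<Sum>s\<in>B. w a s * (\<Sum>j\<in>J. f j a s)))"
    by (simp add: sum_distrib_left mult.assoc)
  finally show ?thesis .
qed

locale transient_mdp =
  fixes p :: "nat \<Rightarrow> 'a::finite \<Rightarrow> nat \<Rightarrow> real" and r :: "nat \<Rightarrow> 'a \<Rightarrow> nat \<Rightarrow> real" and S :: nat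
  assumes p_nonneg: "s \<in> {1..Suc S} \<Longrightarrow> s' \<in> {1..Suc S} \<Longrightarrow> 0 \<le> p s a s'"
    and p_sum: "s \<in> {1..Suc S} \<Longrightarrow> (\<Sum>s'\<in>{1..Suc S}. p s a s') = 1"
    and sink_p: "p (Suc S) a (Suc S) = 1"
    and sink_r: "r (Suc S) a (Suc S) = 0"
    and transient_p: "transient p S"
begin

lemma p_sink_other:
  assumes "s \<in> {1..Suc S}" "s \<noteq> Suc S"
  shows "p (Suc S) a s = 0"
proof -
  have "1 = p (Suc S) a (Suc S) + (\<Sum>s'\<in>{1..Suc S} - {Suc S}. p (Suc S) a s')"
    using p_sum[of "Suc S" a] by (simp add: sum.remove[of _ "Suc S"])
  then have "(\<Sum>s'\<in>{1..Suc S} - {Suc S}. p (Suc S) a s') = 0"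
    using sink_p by simp
  moreover have "\<forall>s'\<in>{1..Suc S} - {Suc S}. 0 \<le> p (Suc S) a s'"
    using p_nonneg by auto
  ultimately show ?thesis
    using assms sum_nonneg_eq_0_iff[of "{1..Suc S} - {Suc S}" "p (Suc S) a"] by auto
qed

lemma exists_p_pos:
  assumes "s \<in> {1..Suc S}"
  shows "\<exists>s'\<in>{1..Suc S}. 0 < p s a s'"
proof (rule ccontr)
  assume "\<not> (\<exists>s'\<in>{1..Suc S}. 0 < p s a s')"
  then have "(\<Sum>s'\<in>{1..Suc S}. p s a s') \<le> 0"
    by (intro sum_nonpos) (auto simp: not_less)
  then show False using p_sum[OF assms] by simp
qed

definition tilt :: "real \<Rightarrow> nat \<Rightarrow> 'a \<Rightarrow> nat \<Rightarrow> real" where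
  "tilt \<beta> s a s' = p s a s' * exp (- \<beta> * r s a s')"

lemma tilt_nonneg: "s \<in> {1..Suc S} \<Longrightarrow> s' \<in> {1..Suc S} \<Longrightarrow> 0 \<le> tilt \<beta> s a s'"
  unfolding tilt_def using p_nonneg by simp

lemma tilt_zero: "tilt 0 = p"
  unfolding tilt_def by (simp add: fun_eq_iff)

lemma sum_tilt_sink: "(\<Sum>s'\<in>{1..Suc S}. tilt \<beta> (Suc S) a s' * f s') = f (Suc S)"
proof -
  have "(\<Sum>s'\<in>{1..Suc S}. tilt \<beta> (Suc S) a s' * f s') =
      (\<Sum>s'\<in>{1..Suc S}. if s' = Suc S then f s' else 0)"
    by (intro sum.cong) (auto simp: tilt_def p_sink_other sink_p sink_r)
  then show ?thesis by simp
qed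

definition tilted_expect :: "real \<Rightarrow> (nat \<Rightarrow> real) \<Rightarrow> nat \<Rightarrow> 'a policy \<Rightarrow> nat \<Rightarrow> real" where
  "tilted_expect \<beta> X n \<pi> s =
     expect p S \<pi> (dirac s) n (\<lambda>ss as. exp (- \<beta> * ret r n ss as) * X (last ss))"

lemma tilted_expect_0: "s \<in> {1..Suc S} \<Longrightarrow> tilted_expect \<beta> X 0 \<pi> s = X s"
  unfolding tilted_expect_def expect_0 by (simp add: sum_dirac ret_0)

lemma tilted_expect_Suc:
  assumes s: "s \<in> {1..Suc S}"
  shows "tilted_expect \<beta> X (Suc n) \<pi> s = (\<Sum>a\<in>UNIV. \<pi> [] s a *
    (\<Sum>s'\<in>{1..Suc S}. tilt \<beta> s a s' * tilted_expect \<beta> X n (shift_policy \<pi> s a) s'))"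
proof -
  have "expect p S (shift_policy \<pi> s a) (p s a) n
      (\<lambda>ss as. exp (- \<beta> * ret r (Suc n) (s # ss) (a # as)) * X (last (s # ss))) =
    (\<Sum>s'\<in>{1..Suc S}. tilt \<beta> s a s' * tilted_expect \<beta> X n (shift_policy \<pi> s a) s')" for a
  proof -
    have "expect p S (shift_policy \<pi> s a) (p s a) n
        (\<lambda>ss as. exp (- \<beta> * ret r (Suc n) (s # ss) (a # as)) * X (last (s # ss))) =
      expect p S (shift_policy \<pi> s a) (p s a) n
        (\<lambda>ss as. exp (- \<beta> * r s a (ss ! 0)) * (exp (- \<beta> * ret r n ss as) * X (last ss)))"
      by (intro expect_cong) (auto simp: ret_Cons mult_exp_exp algebra_simps paths_def)
    also have "\<dots> = (\<Sum>s'\<in>{1..Suc S}. p s a s' * exp (- \<beta> * r s a s') *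
        expect p S (shift_policy \<pi> s a) (dirac s') n (\<lambda>ss as. exp (- \<beta> * ret r n ss as) * X (last ss)))"
      by (rule expect_condition_first_state)
    finally show ?thesis
      by (simp add: tilted_expect_def tilt_def)
  qed
  then show ?thesis
    unfolding tilted_expect_def expect_dirac_Suc[OF s] by simp
qed

lemma tilted_expect_Suc_sd_policy:
  "s \<in> {1..Suc S} \<Longrightarrow> tilted_expect \<beta> X (Suc n) (sd_policy d) s =
     (\<Sum>s'\<in>{1..Suc S}. tilt \<beta> s (d s) s' * tilted_expect \<beta> X n (sd_policy d) s')"
  by (simp add: tilted_expect_Suc shift_sd_policy sum_sd_policy)

definition tilted_recursive :: "real \<Rightarrow> (nat \<Rightarrow> 'a policy \<Rightarrow> nat \<Rightarrow> real) \<Rightarrow> bool" where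
  "tilted_recursive \<beta> V \<longleftrightarrow> (\<forall>n \<pi> s. \<pi> \<in> HR_policies \<longrightarrow> s \<in> {1..Suc S} \<longrightarrow>
      V (Suc n) \<pi> s = (\<Sum>a\<in>UNIV. \<pi> [] s a *
        (\<Sum>s'\<in>{1..Suc S}. tilt \<beta> s a s' * V n (shift_policy \<pi> s a) s')))"

lemma tilted_recursive_tilted_expect: "tilted_recursive \<beta> (tilted_expect \<beta> X)"
  unfolding tilted_recursive_def using tilted_expect_Suc by blast

lemma tilted_recursive_shift: "tilted_recursive \<beta> V \<Longrightarrow> tilted_recursive \<beta> (\<lambda>n. V (n + j))"
  unfolding tilted_recursive_def by simp

lemma tilted_recursive_scale:
  "tilted_recursive \<beta> V \<Longrightarrow> tilted_recursive \<beta> (\<lambda>n \<pi> s. c * V n \<pi> s)"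
  unfolding tilted_recursive_def by (simp add: sum_distrib_left algebra_simps)

lemma tilted_recursive_diff:
  "tilted_recursive \<beta> V \<Longrightarrow> tilted_recursive \<beta> V' \<Longrightarrow>
     tilted_recursive \<beta> (\<lambda>n \<pi> s. V n \<pi> s - V' n \<pi> s)"
  unfolding tilted_recursive_def by (simp add: right_diff_distrib sum_subtractf)

lemma tilted_recursive_sum:
  "(\<And>j. j \<in> J \<Longrightarrow> tilted_recursive \<beta> (V j)) \<Longrightarrow>
     tilted_recursive \<beta> (\<lambda>n \<pi> s. \<Sum>j\<in>J. V j n \<pi> s)"
  unfolding tilted_recursive_def by (simp add: sum_swap_nested)

lemma tilted_recursive_zero: "tilted_recursive \<beta> (\<lambda>n \<pi> s. 0)"
  unfolding tilted_recursive_def by simp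

lemma tilted_recursive_one: "tilted_recursive 0 (\<lambda>n \<pi> s. 1)"
  unfolding tilted_recursive_def tilt_zero
proof (intro allI impI)
  fix n and \<pi> :: "'a policy" and s
  assume "\<pi> \<in> HR_policies" "s \<in> {1..Suc S}"
  then show "1 = (\<Sum>a\<in>UNIV. \<pi> [] s a * (\<Sum>s'\<in>{1..Suc S}. p s a s' * 1))"
    using p_sum HR_policies_sum by simp
qed

lemma tilted_recursive_le:
  assumes "tilted_recursive \<beta> V" "tilted_recursive \<beta> V'"
    and "\<And>\<pi> s. \<pi> \<in> HR_policies \<Longrightarrow> s \<in> {1..Suc S} \<Longrightarrow> V 0 \<pi> s \<le> V' 0 \<pi> s"
  shows "\<pi> \<in> HR_policies \<Longrightarrow> s \<in> {1..Suc S} \<Longrightarrow> V n \<pi> s \<le> V' n \<pi> s"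
proof (induction n arbitrary: \<pi> s)
  case 0
  then show ?case using assms(3) by simp
next
  case (Suc n)
  have "V (Suc n) \<pi> s =
      (\<Sum>a\<in>UNIV. \<pi> [] s a * (\<Sum>s'\<in>{1..Suc S}. tilt \<beta> s a s' * V n (shift_policy \<pi> s a) s'))"
    using assms(1) Suc.prems unfolding tilted_recursive_def by blast
  also have "\<dots> \<le>
      (\<Sum>a\<in>UNIV. \<pi> [] s a * (\<Sum>s'\<in>{1..Suc S}. tilt \<beta> s a s' * V' n (shift_policy \<pi> s a) s'))"
    using Suc.prems Suc.IH[OF shift_policy_HR[OF Suc.prems(1)]]
    by (intro sum_mono mult_left_mono) (auto simp: HR_policies_nonneg tilt_nonneg)
  also have "\<dots> = V' (Suc n) \<pi> s"
    using assms(2) Suc.prems unfolding tilted_recursive_def by simp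
  finally show ?case .
qed

lemma tilted_recursive_eq:
  assumes "tilted_recursive \<beta> V" "tilted_recursive \<beta> V'"
    and "\<And>\<pi> s. \<pi> \<in> HR_policies \<Longrightarrow> s \<in> {1..Suc S} \<Longrightarrow> V 0 \<pi> s = V' 0 \<pi> s"
  shows "\<pi> \<in> HR_policies \<Longrightarrow> s \<in> {1..Suc S} \<Longrightarrow> V n \<pi> s = V' n \<pi> s"
  using tilted_recursive_le[OF assms(1,2)] tilted_recursive_le[OF assms(2,1)] assms(3)
  by (metis order_antisym order_refl)

definition transient_ind :: "nat \<Rightarrow> real" where
  "transient_ind x = (if x \<in> {1..S} then 1 else 0)"

definition sink_ind :: "nat \<Rightarrow> real" where
  "sink_ind x = (if x = Suc S then 1 else 0)"

lemma tilted_expect_split: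
  "tilted_expect \<beta> (\<lambda>_. 1) n \<pi> s = tilted_expect \<beta> transient_ind n \<pi> s + tilted_expect \<beta> sink_ind n \<pi> s"
proof -
  have "tilted_expect \<beta> (\<lambda>_. 1) n \<pi> s = expect p S \<pi> (dirac s) n (\<lambda>ss as.
      exp (- \<beta> * ret r n ss as) * transient_ind (last ss) + exp (- \<beta> * ret r n ss as) * sink_ind (last ss))"
    unfolding tilted_expect_def
    by (intro expect_cong) (auto simp: transient_ind_def sink_ind_def dest!: paths_last)
  then show ?thesis unfolding tilted_expect_def expect_add by simp
qed

lemma tilted_expect_nonneg:
  "\<pi> \<in> HR_policies \<Longrightarrow> s \<in> {1..Suc S} \<Longrightarrow> (\<And>x. 0 \<le> X x) \<Longrightarrow> 0 \<le> tilted_expect \<beta> X n \<pi> s"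
  using tilted_recursive_le[OF tilted_recursive_zero tilted_recursive_tilted_expect, of \<beta> X]
  by (simp add: tilted_expect_0)

lemma expect_dirac_one:
  assumes "\<pi> \<in> HR_policies" "s \<in> {1..Suc S}"
  shows "expect p S \<pi> (dirac s) n (\<lambda>ss as. 1) = 1"
proof -
  have "tilted_expect 0 (\<lambda>_. 1) n \<pi> s = (\<lambda>n \<pi> s. 1) n \<pi> s"
    by (rule tilted_recursive_eq[OF tilted_recursive_tilted_expect tilted_recursive_one])
      (use assms tilted_expect_0 in auto)
  then show ?thesis by (simp add: tilted_expect_def)
qed

lemma tilted_expect_transient_nonneg:
  "\<pi> \<in> HR_policies \<Longrightarrow> s \<in> {1..Suc S} \<Longrightarrow> 0 \<le> tilted_expect \<beta> transient_ind n \<pi> s"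
  by (rule tilted_expect_nonneg) (simp_all add: transient_ind_def)

lemma tilted_expect_sink_nonneg:
  "\<pi> \<in> HR_policies \<Longrightarrow> s \<in> {1..Suc S} \<Longrightarrow> 0 \<le> tilted_expect \<beta> sink_ind n \<pi> s"
  by (rule tilted_expect_nonneg) (simp_all add: sink_ind_def)

lemma tilted_expect_zero_split:
  "\<pi> \<in> HR_policies \<Longrightarrow> s \<in> {1..Suc S} \<Longrightarrow>
     tilted_expect 0 transient_ind n \<pi> s = 1 - tilted_expect 0 sink_ind n \<pi> s"
  using tilted_expect_split[of 0 n \<pi> s] expect_dirac_one[of \<pi> s n]
  by (simp add: tilted_expect_def)

end

section \<open>Uniform absorption in the sink\<close>

lemma finite_Union_mono_attained:
  fixes A :: "nat \<Rightarrow> 'b set"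
  assumes "mono A" "finite (\<Union>k. A k)"
  shows "\<exists>K. (\<Union>k. A k) \<subseteq> A K"
proof -
  have "finite F \<Longrightarrow> F \<subseteq> (\<Union>k. A k) \<Longrightarrow> \<exists>K. F \<subseteq> A K" for F
  proof (induction F rule: finite_induct)
    case (insert x F)
    then obtain K k where "F \<subseteq> A K" "x \<in> A k" by auto
    moreover have "A K \<subseteq> A (max K k)" "A k \<subseteq> A (max K k)"
      using assms(1) by (simp_all add: monoD)
    ultimately show ?case by blast
  qed auto
  then show ?thesis using assms(2) by blast
qed

lemma power_div_le_powr_power:
  fixes q :: real
  assumes q: "0 < q" "q < 1" and K: "0 < K"
  shows "q ^ (n div K) \<le> (1 / q) * (q powr (1 / real K)) ^ n"
proof -
  have "real n / real K - 1 \<le> real (n div K)"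
  proof -
    have "real n = real (n div K) * real K + real (n mod K)"
      by (metis div_mult_mod_eq of_nat_add of_nat_mult)
    moreover have "real (n mod K) < real K" using K by simp
    ultimately have "real n / real K < real (n div K) + 1"
      using K by (simp add: field_simps)
    then show ?thesis by simp
  qed
  then have "q powr real (n div K) \<le> q powr (real n / real K - 1)"
    using q by (intro powr_mono') auto
  also have "\<dots> = (1 / q) * (q powr (1 / real K)) ^ n"
    using q by (simp add: powr_diff powr_powr powr_realpow[symmetric] del: powr_realpow)
  finally show ?thesis using q by (simp add: powr_realpow)
qed

context transient_mdp
begin

lemma closed_set_persists:
  fixes d :: "nat \<Rightarrow> 'a"
  assumes closed: "\<And>s s'. s \<in> U \<Longrightarrow> s' \<in> {1..Suc S} \<Longrightarrow> 0 < p s (d s) s' \<Longrightarrow> s' \<in> U"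
  shows "s \<in> {1..Suc S} \<Longrightarrow> indicator U s \<le> tilted_expect 0 (indicator U) n (sd_policy d) s"
proof (induction n arbitrary: s)
  case 0
  then show ?case by (simp add: tilted_expect_0)
next
  case (Suc n)
  show ?case
  proof (cases "s \<in> U")
    case True
    have "p s (d s) s' = p s (d s) s' * indicator U s'" if "s' \<in> {1..Suc S}" for s'
      using closed[OF True that] p_nonneg[OF Suc.prems that, of "d s"]
      by (cases "0 < p s (d s) s'") auto
    then have "indicator U s = (\<Sum>s'\<in>{1..Suc S}. p s (d s) s' * indicator U s')"
      using p_sum[OF Suc.prems, of "d s"] True by (metis (no_types, lifting) indicator_simps(1) sum.cong)
    also have "\<dots> \<le> (\<Sum>s'\<in>{1..Suc S}. tilt 0 s (d s) s' * tilted_expect 0 (indicator U) n (sd_policy d) s')"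
      using Suc.IH p_nonneg[OF Suc.prems] by (intro sum_mono) (auto simp: tilt_zero intro!: mult_left_mono)
    also have "\<dots> = tilted_expect 0 (indicator U) (Suc n) (sd_policy d) s"
      using tilted_expect_Suc_sd_policy[OF Suc.prems] by simp
    finally show ?thesis .
  next
    case False
    then show ?thesis using tilted_expect_nonneg[OF sd_policy_HR Suc.prems] by simp
  qed
qed

text \<open>A nonempty closed set of transient states would be occupied at every time step,
  so the expected numbers of visits could not be summable.\<close>

lemma no_closed_transient_set:
  fixes d :: "nat \<Rightarrow> 'a"
  assumes U: "U \<subseteq> {1..S}" "U \<noteq> {}"
    and closed: "\<And>s s'. s \<in> U \<Longrightarrow> s' \<in> {1..Suc S} \<Longrightarrow> 0 < p s (d s) s' \<Longrightarrow> s' \<in> U"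
  shows False
proof -
  define visits where "visits s0 s' n = expect p S (sd_policy d) (dirac s0) n
      (\<lambda>ss as. if last ss = s' then 1 else 0)" for s0 s' n
  have fin: "finite U" using U(1) finite_subset by blast
  obtain s0 where s0: "s0 \<in> U" using U(2) by blast
  then have s0_state: "s0 \<in> {1..Suc S}" using U(1) by auto
  have "tilted_expect 0 (indicator U) n (sd_policy d) s0 = (\<Sum>s'\<in>U. visits s0 s' n)" for n
  proof -
    have "tilted_expect 0 (indicator U) n (sd_policy d) s0 = expect p S (sd_policy d) (dirac s0) n
        (\<lambda>ss as. \<Sum>s'\<in>U. if last ss = s' then 1 else 0)"
      unfolding tilted_expect_def using fin by (intro expect_cong) (simp add: indicator_def)
    then show ?thesis unfolding visits_def by (simp add: expect_sum[OF fin])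
  qed
  then have "1 \<le> (\<Sum>s'\<in>U. visits s0 s' n)" for n
    using closed_set_persists[where U = U and d = d, OF closed s0_state, where n = n] s0 by simp
  moreover have "(\<lambda>n. \<Sum>s'\<in>U. visits s0 s' n) \<longlonglongrightarrow> (\<Sum>s'\<in>U. 0)"
  proof (intro tendsto_sum summable_LIMSEQ_zero)
    fix s' assume "s' \<in> U"
    then show "summable (visits s0 s')"
      using transient_p s0 U(1) unfolding transient_def visits_def dirac_def by blast
  qed
  ultimately have "1 \<le> (\<Sum>s'\<in>U. 0::real)" by (intro LIMSEQ_le_const) auto
  then show False by simp
qed

fun sink_layer :: "nat \<Rightarrow> nat set" where
  "sink_layer 0 = {Suc S}"
| "sink_layer (Suc k) = sink_layer k \<union> {s\<in>{1..Suc S}. \<forall>a. \<exists>s'\<in>sink_layer k. 0 < p s a s'}"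

lemma sink_layer_subset: "sink_layer k \<subseteq> {1..Suc S}"
  by (induction k) auto

lemma mono_sink_layer: "mono sink_layer"
  by (rule monoI, erule dec_induct) auto

lemma sink_layer_exhausts: "\<exists>K. {1..Suc S} \<subseteq> sink_layer K"
proof -
  obtain K where K: "(\<Union>k. sink_layer k) \<subseteq> sink_layer K"
    using finite_Union_mono_attained[OF mono_sink_layer]
      finite_subset[OF _ finite_atLeastAtMost] sink_layer_subset by blast
  define U where "U = {1..Suc S} - sink_layer K"
  have escape: "\<exists>a. \<forall>s'\<in>sink_layer K. \<not> 0 < p s a s'" if "s \<in> U" for s
  proof (rule ccontr)
    assume "\<nexists>a. \<forall>s'\<in>sink_layer K. \<not> 0 < p s a s'"
    then have "s \<in> sink_layer (Suc K)" using that by (simp add: U_def)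
    then show False using K that unfolding U_def by blast
  qed
  define d where "d s = (SOME a. \<forall>s'\<in>sink_layer K. \<not> 0 < p s a s')" for s
  have "\<forall>s'\<in>sink_layer K. \<not> 0 < p s (d s) s'" if "s \<in> U" for s
    unfolding d_def using someI_ex[OF escape[OF that]] .
  then have closed: "s' \<in> U" if "s \<in> U" "s' \<in> {1..Suc S}" "0 < p s (d s) s'" for s s'
    using that by (auto simp: U_def)
  have "Suc S \<in> sink_layer K" using monoD[OF mono_sink_layer, of 0 K] by auto
  then have "U \<subseteq> {1..S}" by (auto simp: U_def le_Suc_eq)
  then have "U = {}" using no_closed_transient_set closed by blast
  then show ?thesis by (auto simp: U_def)
qed

definition min_tilt :: "real \<Rightarrow> real" where
  "min_tilt \<beta> =
     Min (insert 1 {tilt \<beta> s a s' | s a s'. s \<in> {1..Suc S} \<and> s' \<in> {1..Suc S} \<and> 0 < p s a s'})"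

lemma finite_positive_tilts:
  "finite {tilt \<beta> s a s' | s a s'. s \<in> {1..Suc S} \<and> s' \<in> {1..Suc S} \<and> 0 < p s a s'}"
proof (rule finite_subset)
  show "{tilt \<beta> s a s' | s a s'. s \<in> {1..Suc S} \<and> s' \<in> {1..Suc S} \<and> 0 < p s a s'}
     \<subseteq> (\<lambda>(s, a, s'). tilt \<beta> s a s') ` ({1..Suc S} \<times> UNIV \<times> {1..Suc S})" by force
qed auto

lemma min_tilt_pos: "0 < min_tilt \<beta>"
  unfolding min_tilt_def using finite_positive_tilts by (subst Min_gr_iff) (auto simp: tilt_def)

lemma min_tilt_le_1: "min_tilt \<beta> \<le> 1"
  unfolding min_tilt_def using finite_positive_tilts by (intro Min_le) auto

lemma min_tilt_le:
  "s \<in> {1..Suc S} \<Longrightarrow> s' \<in> {1..Suc S} \<Longrightarrow> 0 < p s a s' \<Longrightarrow> min_tilt \<beta> \<le> tilt \<beta> s a s'"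
  unfolding min_tilt_def using finite_positive_tilts by (intro Min_le) auto

lemma tilted_expect_sink_Suc:
  assumes "\<pi> \<in> HR_policies" "s \<in> {1..Suc S}"
  shows "tilted_expect \<beta> sink_ind n \<pi> s \<le> tilted_expect \<beta> sink_ind (Suc n) \<pi> s"
proof -
  have "tilted_expect \<beta> sink_ind n \<pi> s \<le> (\<lambda>n. tilted_expect \<beta> sink_ind (n + 1)) n \<pi> s"
  proof (rule tilted_recursive_le[OF tilted_recursive_tilted_expect
        tilted_recursive_shift[OF tilted_recursive_tilted_expect]])
    fix \<pi> :: "'a policy" and s
    assume \<pi>: "\<pi> \<in> HR_policies" and s: "s \<in> {1..Suc S}"
    show "tilted_expect \<beta> sink_ind 0 \<pi> s \<le> tilted_expect \<beta> sink_ind (0 + 1) \<pi> s"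
    proof (cases "s = Suc S")
      case True
      have "tilted_expect \<beta> sink_ind (0 + 1) \<pi> s = (\<Sum>a\<in>UNIV. \<pi> [] s a * 1)"
        using True tilted_expect_Suc[OF s] by (simp only: sum_tilt_sink) (simp add: tilted_expect_0 sink_ind_def)
      then show ?thesis using True HR_policies_sum[OF \<pi>] by (simp add: tilted_expect_0 sink_ind_def)
    next
      case False
      then show ?thesis
        using tilted_expect_sink_nonneg[OF \<pi> s] by (simp add: tilted_expect_0[OF s] sink_ind_def)
    qed
  qed (use assms in auto)
  then show ?thesis by simp
qed

lemma incseq_tilted_expect_sink:
  "\<pi> \<in> HR_policies \<Longrightarrow> s \<in> {1..Suc S} \<Longrightarrow> incseq (\<lambda>n. tilted_expect \<beta> sink_ind n \<pi> s)"
  by (rule incseq_SucI) (rule tilted_expect_sink_Suc)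

lemma tilted_expect_sink_ge_1:
  assumes "\<pi> \<in> HR_policies"
  shows "1 \<le> tilted_expect \<beta> sink_ind n \<pi> (Suc S)"
proof -
  have "tilted_expect \<beta> sink_ind 0 \<pi> (Suc S) \<le> tilted_expect \<beta> sink_ind n \<pi> (Suc S)"
    using incseq_tilted_expect_sink[OF assms, of "Suc S" \<beta>] by (simp add: incseq_def)
  then show ?thesis by (simp add: tilted_expect_0 sink_ind_def)
qed

lemma sink_layer_absorption:
  "s \<in> sink_layer k \<Longrightarrow> \<pi> \<in> HR_policies \<Longrightarrow> min_tilt \<beta> ^ k \<le> tilted_expect \<beta> sink_ind k \<pi> s"
proof (induction k arbitrary: s \<pi>)
  case 0
  then show ?case by (simp add: tilted_expect_0 sink_ind_def)
next
  case (Suc k)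
  note c = min_tilt_pos[of \<beta>] min_tilt_le_1[of \<beta>]
  show ?case
  proof (cases "s \<in> sink_layer k")
    case True
    have "min_tilt \<beta> ^ Suc k \<le> min_tilt \<beta> ^ k" using c by (simp add: mult_left_le_one_le)
    also have "\<dots> \<le> tilted_expect \<beta> sink_ind k \<pi> s"
      by (rule Suc.IH[OF True Suc.prems(2)])
    also have "\<dots> \<le> tilted_expect \<beta> sink_ind (Suc k) \<pi> s"
      using True sink_layer_subset by (intro tilted_expect_sink_Suc[OF Suc.prems(2)]) blast
    finally show ?thesis .
  next
    case False
    then have s: "s \<in> {1..Suc S}" and step: "\<forall>a. \<exists>s'\<in>sink_layer k. 0 < p s a s'"
      using Suc.prems by auto
    have "min_tilt \<beta> ^ Suc k \<le>
        (\<Sum>s'\<in>{1..Suc S}. tilt \<beta> s a s' * tilted_expect \<beta> sink_ind k (shift_policy \<pi> s a) s')" for a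
    proof -
      obtain s' where s': "s' \<in> sink_layer k" "0 < p s a s'" using step by blast
      then have s'_state: "s' \<in> {1..Suc S}" using sink_layer_subset by blast
      note \<pi>' = shift_policy_HR[OF Suc.prems(2)]
      have "min_tilt \<beta> ^ Suc k \<le> tilt \<beta> s a s' * tilted_expect \<beta> sink_ind k (shift_policy \<pi> s a) s'"
        using min_tilt_le[OF s s'_state s'(2)] Suc.IH[OF s'(1) \<pi>'] c tilt_nonneg[OF s s'_state]
        by (simp add: mult_mono)
      also have "\<dots> \<le> (\<Sum>s'\<in>{1..Suc S}. tilt \<beta> s a s' * tilted_expect \<beta> sink_ind k (shift_policy \<pi> s a) s')"
        using s'_state tilt_nonneg[OF s] tilted_expect_sink_nonneg[OF \<pi>']
        by (intro member_le_sum) auto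
      finally show ?thesis .
    qed
    then have "(\<Sum>a\<in>UNIV. \<pi> [] s a * min_tilt \<beta> ^ Suc k) \<le> tilted_expect \<beta> sink_ind (Suc k) \<pi> s"
      unfolding tilted_expect_Suc[OF s]
      by (intro sum_mono mult_left_mono HR_policies_nonneg[OF Suc.prems(2)])
    then show ?thesis using HR_policies_sum[OF Suc.prems(2)] by (simp add: sum_distrib_right[symmetric])
  qed
qed

lemma uniform_absorption:
  "\<exists>K c. 0 < K \<and> 0 < c \<and> c \<le> 1 \<and>
     (\<forall>\<pi>\<in>HR_policies. \<forall>s\<in>{1..Suc S}. c \<le> tilted_expect \<beta> sink_ind K \<pi> s)"
proof -
  obtain K where K: "{1..Suc S} \<subseteq> sink_layer K" using sink_layer_exhausts by blast
  have "min_tilt \<beta> ^ K \<le> tilted_expect \<beta> sink_ind (Suc K) \<pi> s"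
    if "\<pi> \<in> HR_policies" "s \<in> {1..Suc S}" for \<pi> s
    using sink_layer_absorption[of s K \<pi> \<beta>] K tilted_expect_sink_Suc[OF that, of \<beta> K] that by auto
  moreover have "0 < min_tilt \<beta> ^ K" "min_tilt \<beta> ^ K \<le> 1"
    using min_tilt_pos[of \<beta>] min_tilt_le_1[of \<beta>] by (auto intro: power_le_one)
  ultimately show ?thesis by (intro exI[of _ "Suc K"] exI[of _ "min_tilt \<beta> ^ K"]) auto
qed

text \<open>Both sides below obey the recursion, so it suffices to compare them at time \<open>0\<close>.\<close>

lemma transient_le_sink_increment:
  assumes c: "0 < c" and K: "\<forall>\<pi>\<in>HR_policies. \<forall>s\<in>{1..Suc S}. c \<le> tilted_expect \<beta> sink_ind K \<pi> s"
    and \<pi>: "\<pi> \<in> HR_policies" and s: "s \<in> {1..Suc S}"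
  shows "tilted_expect \<beta> transient_ind n \<pi> s \<le>
    (1 / c) * (tilted_expect \<beta> sink_ind (n + K) \<pi> s - tilted_expect \<beta> sink_ind n \<pi> s)"
proof -
  have "tilted_expect \<beta> transient_ind n \<pi> s \<le> (\<lambda>n \<pi> s. (1 / c) *
      ((\<lambda>n. tilted_expect \<beta> sink_ind (n + K)) n \<pi> s - tilted_expect \<beta> sink_ind n \<pi> s)) n \<pi> s"
  proof (rule tilted_recursive_le[OF tilted_recursive_tilted_expect tilted_recursive_scale[OF
        tilted_recursive_diff[OF tilted_recursive_shift[OF tilted_recursive_tilted_expect]
          tilted_recursive_tilted_expect]]])
    fix \<pi> :: "'a policy" and s
    assume \<pi>: "\<pi> \<in> HR_policies" and s: "s \<in> {1..Suc S}"
    show "tilted_expect \<beta> transient_ind 0 \<pi> s \<le> (1 / c) *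
        ((\<lambda>n. tilted_expect \<beta> sink_ind (n + K)) 0 \<pi> s - tilted_expect \<beta> sink_ind 0 \<pi> s)"
    proof (cases "s = Suc S")
      case True
      then show ?thesis using tilted_expect_sink_ge_1[OF \<pi>, of \<beta> K] c
        by (simp add: tilted_expect_0 transient_ind_def sink_ind_def)
    next
      case False
      then have "s \<in> {1..S}" using s by auto
      then show ?thesis using K \<pi> c by (simp add: tilted_expect_0[OF s] transient_ind_def sink_ind_def)
    qed
  qed (use \<pi> s in auto)
  then show ?thesis by simp
qed

lemma transient_decay:
  assumes K: "\<forall>\<pi>\<in>HR_policies. \<forall>s\<in>{1..Suc S}. c \<le> tilted_expect 0 sink_ind K \<pi> s"
    and \<pi>: "\<pi> \<in> HR_policies" and s: "s \<in> {1..Suc S}"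
  shows "tilted_expect 0 transient_ind (n + K) \<pi> s \<le> (1 - c) * tilted_expect 0 transient_ind n \<pi> s"
proof -
  have "(\<lambda>n. tilted_expect 0 transient_ind (n + K)) n \<pi> s \<le>
      (\<lambda>n \<pi> s. (1 - c) * tilted_expect 0 transient_ind n \<pi> s) n \<pi> s"
  proof (rule tilted_recursive_le[OF tilted_recursive_shift[OF tilted_recursive_tilted_expect]
        tilted_recursive_scale[OF tilted_recursive_tilted_expect]])
    fix \<pi> :: "'a policy" and s
    assume \<pi>: "\<pi> \<in> HR_policies" and s: "s \<in> {1..Suc S}"
    show "(\<lambda>n. tilted_expect 0 transient_ind (n + K)) 0 \<pi> s \<le> (1 - c) * tilted_expect 0 transient_ind 0 \<pi> s"
    proof (cases "s = Suc S")
      case True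
      then show ?thesis using tilted_expect_zero_split[OF \<pi> s] tilted_expect_sink_ge_1[OF \<pi>, of 0 K]
        by (simp add: tilted_expect_0 transient_ind_def sink_ind_def)
    next
      case False
      then have "s \<in> {1..S}" using s by auto
      then show ?thesis using tilted_expect_zero_split[OF \<pi> s] K \<pi> s
        by (simp add: tilted_expect_0[OF s] transient_ind_def)
    qed
  qed (use \<pi> s in auto)
  then show ?thesis by simp
qed

lemma transient_le_power_div:
  assumes K: "0 < K" "\<forall>\<pi>\<in>HR_policies. \<forall>s\<in>{1..Suc S}. c \<le> tilted_expect 0 sink_ind K \<pi> s"
    and q: "0 \<le> q" "1 - c \<le> q" and \<pi>: "\<pi> \<in> HR_policies" and s: "s \<in> {1..Suc S}"
  shows "tilted_expect 0 transient_ind n \<pi> s \<le> q ^ (n div K)"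
proof (induction n rule: less_induct)
  case (less n)
  note nonneg = tilted_expect_transient_nonneg[OF \<pi> s]
  show ?case
  proof (cases "n < K")
    case True
    then show ?thesis
      using tilted_expect_zero_split[OF \<pi> s] tilted_expect_sink_nonneg[OF \<pi> s] by simp
  next
    case False
    then have "tilted_expect 0 transient_ind n \<pi> s = tilted_expect 0 transient_ind (n - K + K) \<pi> s"
      by simp
    also have "\<dots> \<le> (1 - c) * tilted_expect 0 transient_ind (n - K) \<pi> s"
      by (rule transient_decay[OF K(2) \<pi> s])
    also have "\<dots> \<le> q * q ^ ((n - K) div K)"
      using less.IH[of "n - K"] K(1) False q nonneg by (intro mult_mono) auto
    also have "\<dots> = q ^ (n div K)" using le_div_geq[OF K(1)] False by simp
    finally show ?thesis .
  qed
qed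

lemma transient_geometric:
  "\<exists>C \<rho>. 0 < C \<and> 0 < \<rho> \<and> \<rho> < 1 \<and>
     (\<forall>\<pi>\<in>HR_policies. \<forall>s\<in>{1..Suc S}. \<forall>n. tilted_expect 0 transient_ind n \<pi> s \<le> C * \<rho> ^ n)"
proof -
  obtain K c where Kc: "0 < K" "0 < c" "c \<le> 1"
    "\<forall>\<pi>\<in>HR_policies. \<forall>s\<in>{1..Suc S}. c \<le> tilted_expect 0 sink_ind K \<pi> s"
    using uniform_absorption[of 0] by blast
  define q where "q = max (1 - c) (1 / 2)"
  have q: "0 < q" "q < 1" "1 - c \<le> q" using Kc unfolding q_def by auto
  have "tilted_expect 0 transient_ind n \<pi> s \<le> (1 / q) * (q powr (1 / real K)) ^ n"
    if "\<pi> \<in> HR_policies" "s \<in> {1..Suc S}" for \<pi> s n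
    using order_trans[OF transient_le_power_div[OF Kc(1,4) _ q(3) that]
        power_div_le_powr_power[OF q(1,2) Kc(1)]] q
    by simp
  moreover have "0 < q powr (1 / real K)" "q powr (1 / real K) < 1"
    using q Kc(1) by (auto simp: powr01_less_one)
  ultimately show ?thesis using q by (intro exI[of _ "1 / q"] exI[of _ "q powr (1 / real K)"]) auto
qed

section \<open>Convergence of the mean return\<close>

lemma abs_policy_average_le:
  assumes "\<pi> \<in> HR_policies" "s \<in> {1..Suc S}"
  shows "\<bar>\<Sum>a\<in>UNIV. \<pi> [] s a * (\<Sum>s'\<in>{1..Suc S}. tilt \<beta> s a s' * f a s')\<bar> \<le>
    (\<Sum>a\<in>UNIV. \<pi> [] s a * (\<Sum>s'\<in>{1..Suc S}. tilt \<beta> s a s' * \<bar>f a s'\<bar>))"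
proof -
  have "\<bar>\<Sum>s'\<in>{1..Suc S}. tilt \<beta> s a s' * f a s'\<bar> \<le> (\<Sum>s'\<in>{1..Suc S}. tilt \<beta> s a s' * \<bar>f a s'\<bar>)" for a
    using sum_abs[of "\<lambda>s'. tilt \<beta> s a s' * f a s'" "{1..Suc S}"] tilt_nonneg[OF assms(2)]
    by (simp add: abs_mult)
  then have "\<bar>\<pi> [] s a * (\<Sum>s'\<in>{1..Suc S}. tilt \<beta> s a s' * f a s')\<bar> \<le>
      \<pi> [] s a * (\<Sum>s'\<in>{1..Suc S}. tilt \<beta> s a s' * \<bar>f a s'\<bar>)" for a
    using HR_policies_nonneg[OF assms(1)] by (simp add: abs_mult mult_left_mono)
  then show ?thesis
    by (rule order_trans[OF sum_abs sum_mono])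
qed

definition expected_return :: "nat \<Rightarrow> 'a policy \<Rightarrow> nat \<Rightarrow> real" where
  "expected_return n \<pi> s = expect p S \<pi> (dirac s) n (ret r n)"

definition expected_reward :: "'a policy \<Rightarrow> nat \<Rightarrow> real" where
  "expected_reward \<pi> s = (\<Sum>a\<in>UNIV. \<pi> [] s a * (\<Sum>s'\<in>{1..Suc S}. p s a s' * r s a s'))"

definition reward_bound :: real where
  "reward_bound = (\<Sum>s\<in>{1..Suc S}. \<Sum>a\<in>UNIV. \<Sum>s'\<in>{1..Suc S}. \<bar>r s a s'\<bar>)"

lemma abs_reward_le: "s \<in> {1..Suc S} \<Longrightarrow> s' \<in> {1..Suc S} \<Longrightarrow> \<bar>r s a s'\<bar> \<le> reward_bound"
proof -
  assume s: "s \<in> {1..Suc S}" and s': "s' \<in> {1..Suc S}"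
  have "\<bar>r s a s'\<bar> \<le> (\<Sum>s'\<in>{1..Suc S}. \<bar>r s a s'\<bar>)"
    using s' by (intro member_le_sum) auto
  also have "\<dots> \<le> (\<Sum>a\<in>UNIV. \<Sum>s'\<in>{1..Suc S}. \<bar>r s a s'\<bar>)"
    by (intro member_le_sum) (auto intro: sum_nonneg)
  also have "\<dots> \<le> reward_bound"
    unfolding reward_bound_def using s by (intro member_le_sum) (auto intro!: sum_nonneg)
  finally show ?thesis .
qed

lemma reward_bound_nonneg: "0 \<le> reward_bound"
  unfolding reward_bound_def by (auto intro!: sum_nonneg)

lemma expected_return_0: "expected_return 0 \<pi> s = 0"
  unfolding expected_return_def ret_0 by (simp add: expect_zero)

lemma expected_return_Suc:
  assumes \<pi>: "\<pi> \<in> HR_policies" and s: "s \<in> {1..Suc S}"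
  shows "expected_return (Suc n) \<pi> s = expected_reward \<pi> s +
    (\<Sum>a\<in>UNIV. \<pi> [] s a * (\<Sum>s'\<in>{1..Suc S}. tilt 0 s a s' * expected_return n (shift_policy \<pi> s a) s'))"
proof -
  have "expect p S (shift_policy \<pi> s a) (p s a) n (\<lambda>ss as. ret r (Suc n) (s # ss) (a # as)) =
      (\<Sum>s'\<in>{1..Suc S}. p s a s' * r s a s') +
      (\<Sum>s'\<in>{1..Suc S}. tilt 0 s a s' * expected_return n (shift_policy \<pi> s a) s')" for a
  proof -
    have "expect p S (shift_policy \<pi> s a) (p s a) n (\<lambda>ss as. ret r (Suc n) (s # ss) (a # as)) =
        expect p S (shift_policy \<pi> s a) (p s a) n (\<lambda>ss as. r s a (ss ! 0) * 1) +
        expect p S (shift_policy \<pi> s a) (p s a) n (\<lambda>ss as. 1 * ret r n ss as)"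
      by (simp add: ret_Cons expect_add[symmetric])
    also have "\<dots> = (\<Sum>s'\<in>{1..Suc S}. p s a s' * r s a s' *
          expect p S (shift_policy \<pi> s a) (dirac s') n (\<lambda>ss as. 1)) +
        (\<Sum>s'\<in>{1..Suc S}. p s a s' * 1 * expect p S (shift_policy \<pi> s a) (dirac s') n (ret r n))"
      by (simp only: expect_condition_first_state[of p S _ "p s a" n "r s a" "\<lambda>_ _. 1"]
          expect_condition_first_state[of p S _ "p s a" n "\<lambda>_. 1" "ret r n"])
    finally show ?thesis
      using expect_dirac_one[OF shift_policy_HR[OF \<pi>]] by (simp add: tilt_zero expected_return_def)
  qed
  then show ?thesis
    unfolding expected_return_def[of "Suc n"] expect_dirac_Suc[OF s] expected_reward_def
    by (simp add: distrib_left sum.distrib expected_return_def)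
qed

lemma abs_expected_reward_le:
  assumes \<pi>: "\<pi> \<in> HR_policies" and s: "s \<in> {1..Suc S}"
  shows "\<bar>expected_reward \<pi> s\<bar> \<le> reward_bound * transient_ind s"
proof (cases "s = Suc S")
  case True
  have "expected_reward \<pi> s = (\<Sum>a\<in>UNIV. \<pi> [] s a * (\<Sum>s'\<in>{1..Suc S}. tilt 0 (Suc S) a s' * r (Suc S) a s'))"
    unfolding expected_reward_def tilt_zero True ..
  also have "\<dots> = 0" by (simp only: sum_tilt_sink) (simp add: sink_r)
  finally show ?thesis using reward_bound_nonneg True by (simp add: transient_ind_def)
next
  case False
  have "\<bar>expected_reward \<pi> s\<bar> \<le> (\<Sum>a\<in>UNIV. \<pi> [] s a * (\<Sum>s'\<in>{1..Suc S}. tilt 0 s a s' * \<bar>r s a s'\<bar>))"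
    using abs_policy_average_le[OF \<pi> s, of 0 "\<lambda>a. r s a"] unfolding expected_reward_def tilt_zero .
  also have "\<dots> \<le> (\<Sum>a\<in>UNIV. \<pi> [] s a * (\<Sum>s'\<in>{1..Suc S}. p s a s' * reward_bound))"
    unfolding tilt_zero using HR_policies_nonneg[OF \<pi>] p_nonneg[OF s] abs_reward_le[OF s]
    by (intro sum_mono mult_left_mono) auto
  also have "\<dots> = reward_bound"
    using p_sum[OF s] HR_policies_sum[OF \<pi>] by (simp add: sum_distrib_right[symmetric])
  finally show ?thesis using False s by (simp add: transient_ind_def)
qed

lemma abs_expected_return_le:
  "\<pi> \<in> HR_policies \<Longrightarrow> s \<in> {1..Suc S} \<Longrightarrow>
     \<bar>expected_return m \<pi> s\<bar> \<le> reward_bound * (\<Sum>j<m. tilted_expect 0 transient_ind j \<pi> s)"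
proof (induction m arbitrary: \<pi> s)
  case 0
  then show ?case by (simp add: expected_return_0)
next
  case (Suc m)
  note \<pi>' = shift_policy_HR[OF Suc.prems(1)]
  have "\<bar>expected_return (Suc m) \<pi> s\<bar> \<le> \<bar>expected_reward \<pi> s\<bar> +
      (\<Sum>a\<in>UNIV. \<pi> [] s a * (\<Sum>s'\<in>{1..Suc S}. tilt 0 s a s' * \<bar>expected_return m (shift_policy \<pi> s a) s'\<bar>))"
    unfolding expected_return_Suc[OF Suc.prems]
    using abs_policy_average_le[OF Suc.prems, of 0 "\<lambda>a. expected_return m (shift_policy \<pi> s a)"]
    by linarith
  also have "\<dots> \<le> reward_bound * transient_ind s + (\<Sum>a\<in>UNIV. \<pi> [] s a * (\<Sum>s'\<in>{1..Suc S}.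
      tilt 0 s a s' * (reward_bound * (\<Sum>j<m. tilted_expect 0 transient_ind j (shift_policy \<pi> s a) s'))))"
  proof -
    have "(\<Sum>s'\<in>{1..Suc S}. tilt 0 s a s' * \<bar>expected_return m (shift_policy \<pi> s a) s'\<bar>) \<le>
        (\<Sum>s'\<in>{1..Suc S}. tilt 0 s a s' *
          (reward_bound * (\<Sum>j<m. tilted_expect 0 transient_ind j (shift_policy \<pi> s a) s')))" for a
      using Suc.IH[OF \<pi>'] tilt_nonneg[OF Suc.prems(2)] by (intro sum_mono) (simp add: mult_left_mono)
    then show ?thesis
      by (rule add_mono[OF abs_expected_reward_le[OF Suc.prems]
            sum_mono[OF mult_left_mono[OF _ HR_policies_nonneg[OF Suc.prems(1)]]]])
  qed
  also have "\<dots> = reward_bound * transient_ind s +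
      reward_bound * (\<Sum>j<m. tilted_expect 0 transient_ind (Suc j) \<pi> s)"
  proof -
    have "(\<Sum>j<m. tilted_expect 0 transient_ind (Suc j) \<pi> s) = (\<Sum>a\<in>UNIV. \<pi> [] s a * (\<Sum>s'\<in>{1..Suc S}.
        tilt 0 s a s' * (\<Sum>j<m. tilted_expect 0 transient_ind j (shift_policy \<pi> s a) s')))"
      unfolding tilted_expect_Suc[OF Suc.prems(2)] by (rule sum_swap_nested)
    then show ?thesis by (simp add: sum_distrib_left algebra_simps)
  qed
  also have "\<dots> = reward_bound * (\<Sum>j<Suc m. tilted_expect 0 transient_ind j \<pi> s)"
    by (simp add: sum.lessThan_Suc_shift tilted_expect_0[OF Suc.prems(2)] distrib_left
        del: sum.lessThan_Suc)
  finally show ?case .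
qed

lemma expected_return_increment_le:
  assumes "\<pi> \<in> HR_policies" "s \<in> {1..Suc S}"
  shows "\<bar>expected_return (n + m) \<pi> s - expected_return n \<pi> s\<bar> \<le>
    reward_bound * (\<Sum>j<m. tilted_expect 0 transient_ind (n + j) \<pi> s)"
proof -
  have rec_incr: "tilted_recursive 0 (\<lambda>n \<pi> s. expected_return (n + m) \<pi> s - expected_return n \<pi> s)"
    unfolding tilted_recursive_def using expected_return_Suc
    by (simp add: right_diff_distrib sum_subtractf)
  have rec_bound: "tilted_recursive 0
      (\<lambda>n \<pi> s. reward_bound * (\<Sum>j<m. (\<lambda>n. tilted_expect 0 transient_ind (n + j)) n \<pi> s))"
    by (intro tilted_recursive_scale tilted_recursive_sum tilted_recursive_shift
        tilted_recursive_tilted_expect)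
  have base: "\<bar>expected_return (0 + m) \<pi> s - expected_return 0 \<pi> s\<bar> \<le>
      reward_bound * (\<Sum>j<m. tilted_expect 0 transient_ind (0 + j) \<pi> s)"
    if "\<pi> \<in> HR_policies" "s \<in> {1..Suc S}" for \<pi> s
    using abs_expected_return_le[OF that] by (simp add: expected_return_0)
  show ?thesis
    using tilted_recursive_le[OF rec_incr rec_bound, of \<pi> s n]
      tilted_recursive_le[OF tilted_recursive_scale[OF rec_incr, of "-1"] rec_bound, of \<pi> s n]
      base assms
    by (auto simp: abs_le_iff)
qed

end

section \<open>Convergence of the entropic risk of the return\<close>

lemma exp_weighted_mean_le:
  fixes w X :: "'i \<Rightarrow> real"
  assumes fin: "finite I" and w: "\<And>i. i \<in> I \<Longrightarrow> 0 \<le> w i" and w1: "(\<Sum>i\<in>I. w i) = 1"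
  shows "exp (- \<beta> * (\<Sum>i\<in>I. w i * X i)) \<le> (\<Sum>i\<in>I. w i * exp (- \<beta> * X i))"
proof -
  define m where "m = (\<Sum>i\<in>I. w i * X i)"
  have tangent: "exp (- \<beta> * m) * (1 - \<beta> * (X i - m)) \<le> exp (- \<beta> * X i)" for i
  proof -
    have "exp (- \<beta> * m) * (1 + (- \<beta> * (X i - m))) \<le> exp (- \<beta> * m) * exp (- \<beta> * (X i - m))"
      by (intro mult_left_mono exp_ge_add_one_self) auto
    then show ?thesis by (simp add: mult_exp_exp algebra_simps)
  qed
  have "(\<Sum>i\<in>I. w i * (exp (- \<beta> * m) * (1 - \<beta> * (X i - m)))) =
      exp (- \<beta> * m) * ((\<Sum>i\<in>I. w i) - \<beta> * ((\<Sum>i\<in>I. w i * X i) - m * (\<Sum>i\<in>I. w i)))"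
    by (simp add: algebra_simps sum_distrib_left sum_distrib_right sum_subtractf sum.distrib)
  also have "\<dots> = exp (- \<beta> * m)" using w1 by (simp add: m_def)
  finally show ?thesis
    using sum_mono[of I "\<lambda>i. w i * (exp (- \<beta> * m) * (1 - \<beta> * (X i - m)))" "\<lambda>i. w i * exp (- \<beta> * X i)"]
      tangent w
    by (simp add: mult_left_mono m_def)
qed

lemma entropic_le_weighted_mean:
  fixes w X :: "'i \<Rightarrow> real"
  assumes "finite I" "\<And>i. i \<in> I \<Longrightarrow> 0 \<le> w i" "(\<Sum>i\<in>I. w i) = 1" and b: "0 < \<beta>"
  shows "- (1 / \<beta>) * ln (\<Sum>i\<in>I. w i * exp (- \<beta> * X i)) \<le> (\<Sum>i\<in>I. w i * X i)"
proof -
  have j: "exp (- \<beta> * (\<Sum>i\<in>I. w i * X i)) \<le> (\<Sum>i\<in>I. w i * exp (- \<beta> * X i))"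
    by (rule exp_weighted_mean_le[OF assms(1-3)])
  then have "- \<beta> * (\<Sum>i\<in>I. w i * X i) \<le> ln (\<Sum>i\<in>I. w i * exp (- \<beta> * X i))"
    using order_less_le_trans[OF exp_gt_zero j] by (subst ln_ge_iff) auto
  then show ?thesis using b by (simp add: field_simps)
qed

text \<open>Monotonicity in \<open>\<beta>\<close> is Jensen's inequality for the convex map \<open>x \<mapsto> x powr (\<beta>'/\<beta>)\<close>.\<close>

lemma entropic_weighted_antimono:
  fixes w X :: "'i \<Rightarrow> real"
  assumes fin: "finite I" and w: "\<And>i. i \<in> I \<Longrightarrow> 0 \<le> w i" and w1: "(\<Sum>i\<in>I. w i) = 1"
    and b: "0 < \<beta>" "\<beta> \<le> \<beta>'"
  shows "- (1 / \<beta>') * ln (\<Sum>i\<in>I. w i * exp (- \<beta>' * X i)) \<le>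
    - (1 / \<beta>) * ln (\<Sum>i\<in>I. w i * exp (- \<beta> * X i))"
proof -
  define l where "l = \<beta>' / \<beta>"
  define Z where "Z = (\<Sum>i\<in>I. w i * exp (- \<beta> * X i))"
  have l: "1 \<le> l" using b by (simp add: l_def)
  have Z: "0 < Z"
    unfolding Z_def by (rule order_less_le_trans[OF exp_gt_zero exp_weighted_mean_le[OF fin w w1]])
  have "I \<noteq> {}" using w1 by auto
  then have "Z powr l \<le> (\<Sum>i\<in>I. w i * (exp (- \<beta> * X i) powr l))"
    unfolding Z_def using convex_on_sum[OF fin _ powr_convex[OF l] w1, where y = "\<lambda>i. exp (- \<beta> * X i)"] w
    by simp
  also have "\<dots> = (\<Sum>i\<in>I. w i * exp (- \<beta>' * X i))"
    using b by (simp add: powr_def l_def field_simps)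
  finally have le: "Z powr l \<le> (\<Sum>i\<in>I. w i * exp (- \<beta>' * X i))" .
  have pos: "0 < Z powr l" using Z by simp
  then have "ln (Z powr l) \<le> ln (\<Sum>i\<in>I. w i * exp (- \<beta>' * X i))"
    using le by (subst ln_le_cancel_iff[OF pos order_less_le_trans[OF pos le]])
  then have "l * ln Z \<le> ln (\<Sum>i\<in>I. w i * exp (- \<beta>' * X i))"
    using Z by (simp add: ln_powr)
  then show ?thesis using b by (simp add: l_def Z_def field_simps)
qed

lemma convergent_if_increments_geometric:
  fixes f :: "nat \<Rightarrow> real"
  assumes \<rho>: "0 < \<rho>" "\<rho> < 1" and incr: "\<And>n m. \<bar>f (n + m) - f n\<bar> \<le> B * \<rho> ^ n"
  shows "convergent f"
proof -
  have "Cauchy f"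
  proof (rule metric_CauchyI)
    fix e :: real
    assume e: "0 < e"
    have "(\<lambda>n. B * \<rho> ^ n) \<longlonglongrightarrow> B * 0"
      using \<rho> by (intro tendsto_mult tendsto_const LIMSEQ_power_zero) auto
    from LIMSEQ_D[OF this, of "e / 2"] e obtain M where "\<forall>n\<ge>M. norm (B * \<rho> ^ n - B * 0) < e / 2"
      by auto
    then have M: "B * \<rho> ^ M < e / 2" by (auto simp: abs_less_iff)
    have near: "\<bar>f m - f M\<bar> \<le> B * \<rho> ^ M" if "M \<le> m" for m
      using incr[of M "m - M"] that by simp
    have "dist (f m) (f n) < e" if "M \<le> m" "M \<le> n" for m n
      using near[OF that(1)] near[OF that(2)] M unfolding dist_real_def by arith
    then show "\<exists>M. \<forall>m\<ge>M. \<forall>n\<ge>M. dist (f m) (f n) < e" by blast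
  qed
  then show ?thesis by (simp add: Cauchy_convergent_iff)
qed

lemma tendsto_zero_if_le_increment:
  fixes B C :: "nat \<Rightarrow> real"
  assumes "incseq B" "bdd_above (range B)"
    and C: "\<And>n. 0 \<le> C n" "\<And>n. C n \<le> k * (B (n + K) - B n)"
  shows "C \<longlonglongrightarrow> 0"
proof (rule tendsto_sandwich[OF always_eventually always_eventually tendsto_const])
  have B: "B \<longlonglongrightarrow> (SUP n. B n)" by (rule LIMSEQ_incseq_SUP[OF assms(2,1)])
  have "(\<lambda>n. k * (B (n + K) - B n)) \<longlonglongrightarrow> k * ((SUP n. B n) - (SUP n. B n))"
    by (intro tendsto_mult tendsto_const tendsto_diff B LIMSEQ_ignore_initial_segment)
  then show "(\<lambda>n. k * (B (n + K) - B n)) \<longlonglongrightarrow> 0" by simp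
qed (use C in auto)

locale transient_mdp_init = transient_mdp p r S for p :: "nat \<Rightarrow> 'a::finite \<Rightarrow> nat \<Rightarrow> real" and r S +
  fixes \<mu> :: "nat \<Rightarrow> real"
  assumes mu_nonneg: "s \<in> {1..Suc S} \<Longrightarrow> 0 \<le> \<mu> s"
    and mu_sum: "(\<Sum>s\<in>{1..Suc S}. \<mu> s) = 1"
    and mu_pos: "s \<in> {1..S} \<Longrightarrow> 0 < \<mu> s"
begin

lemma path_weight_nonneg:
  assumes "\<pi> \<in> HR_policies" "(ss, as) \<in> paths S n"
  shows "0 \<le> path_weight p \<pi> \<mu> n ss as"
  unfolding path_weight_def
proof (rule mult_nonneg_nonneg[OF _ prod_nonneg])
  show "0 \<le> \<mu> (ss ! 0)" using mu_nonneg paths_nth[OF assms(2), of 0] by auto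
  fix k
  assume "k \<in> {..<n}"
  then have "ss ! k \<in> {1..Suc S}" "ss ! Suc k \<in> {1..Suc S}" using paths_nth[OF assms(2)] by auto
  then show "0 \<le> \<pi> (zip (take k ss) (take k as)) (ss ! k) (as ! k) * p (ss ! k) (as ! k) (ss ! Suc k)"
    using HR_policies_nonneg[OF assms(1)] p_nonneg by (intro mult_nonneg_nonneg) auto
qed

lemma expect_eq_weighted_sum:
  "expect p S \<pi> \<mu> n f = (\<Sum>x\<in>paths S n. path_weight p \<pi> \<mu> n (fst x) (snd x) * f (fst x) (snd x))"
  unfolding expect_def by (simp add: case_prod_beta)

lemma sum_path_weight:
  assumes "\<pi> \<in> HR_policies"
  shows "(\<Sum>x\<in>paths S n. path_weight p \<pi> \<mu> n (fst x) (snd x)) = 1"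
proof -
  have "(\<Sum>x\<in>paths S n. path_weight p \<pi> \<mu> n (fst x) (snd x)) = expect p S \<pi> \<mu> n (\<lambda>ss as. 1)"
    by (simp add: expect_eq_weighted_sum)
  also have "\<dots> = 1"
    unfolding expect_mixture[of p S \<pi> \<mu>] using expect_dirac_one[OF assms] mu_sum by simp
  finally show ?thesis .
qed

lemma erm_antimono:
  assumes \<pi>: "\<pi> \<in> HR_policies" and b: "0 \<le> \<beta>" "\<beta> \<le> \<beta>'"
  shows "erm p S \<pi> \<mu> n \<beta>' f \<le> erm p S \<pi> \<mu> n \<beta> f"
proof -
  note w = path_weight_nonneg[OF \<pi>] and w1 = sum_path_weight[OF \<pi>]
  have w': "x \<in> paths S n \<Longrightarrow> 0 \<le> path_weight p \<pi> \<mu> n (fst x) (snd x)" for x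
    using w[of "fst x" "snd x"] by simp
  consider "\<beta>' = 0" | "\<beta> = 0" "0 < \<beta>'" | "0 < \<beta>" using b by linarith
  then show ?thesis
  proof cases
    case 1
    then show ?thesis using b by simp
  next
    case 2
    then show ?thesis unfolding erm_def expect_eq_weighted_sum
      using entropic_le_weighted_mean[OF finite_paths w' w1 2(2), of "\<lambda>x. f (fst x) (snd x)"] by simp
  next
    case 3
    then show ?thesis unfolding erm_def expect_eq_weighted_sum using b
      using entropic_weighted_antimono[OF finite_paths w' w1 3 b(2), of "\<lambda>x. f (fst x) (snd x)"] by simp
  qed
qed

lemma exp_expect_le_expect_exp:
  assumes "\<pi> \<in> HR_policies"
  shows "exp (- \<beta> * expect p S \<pi> \<mu> n f) \<le> expect p S \<pi> \<mu> n (\<lambda>ss as. exp (- \<beta> * f ss as))"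
  unfolding expect_eq_weighted_sum
  using exp_weighted_mean_le[OF finite_paths _ sum_path_weight[OF assms], of _ \<beta> "\<lambda>x. f (fst x) (snd x)"]
    path_weight_nonneg[OF assms]
  by auto

definition mean_return :: "nat \<Rightarrow> 'a policy \<Rightarrow> real" where
  "mean_return n \<pi> = expect p S \<pi> \<mu> n (ret r n)"

lemma mean_return_eq: "mean_return n \<pi> = (\<Sum>s\<in>{1..Suc S}. \<mu> s * expected_return n \<pi> s)"
  unfolding mean_return_def expected_return_def by (rule expect_mixture)

lemma mean_return_0: "mean_return 0 \<pi> = 0"
  unfolding mean_return_eq by (simp add: expected_return_0)

lemma mean_return_increment_geometric:
  "\<exists>B \<rho>. 0 < \<rho> \<and> \<rho> < 1 \<and>
     (\<forall>\<pi>\<in>HR_policies. \<forall>n m. \<bar>mean_return (n + m) \<pi> - mean_return n \<pi>\<bar> \<le> B * \<rho> ^ n)"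
proof -
  obtain C \<rho> where C: "0 < C" "0 < \<rho>" "\<rho> < 1"
    "\<forall>\<pi>\<in>HR_policies. \<forall>s\<in>{1..Suc S}. \<forall>n. tilted_expect 0 transient_ind n \<pi> s \<le> C * \<rho> ^ n"
    using transient_geometric by blast
  define B where "B = reward_bound * C / (1 - \<rho>)"
  have state: "\<bar>expected_return (n + m) \<pi> s - expected_return n \<pi> s\<bar> \<le> B * \<rho> ^ n"
    if \<pi>: "\<pi> \<in> HR_policies" and s: "s \<in> {1..Suc S}" for \<pi> s n m
  proof -
    have "\<bar>expected_return (n + m) \<pi> s - expected_return n \<pi> s\<bar> \<le>
        reward_bound * (\<Sum>j<m. C * \<rho> ^ (n + j))"
      using expected_return_increment_le[OF \<pi> s] C(4) \<pi> s reward_bound_nonneg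
      by (meson order_trans mult_left_mono sum_mono)
    also have "\<dots> = reward_bound * C * \<rho> ^ n * (\<Sum>j<m. \<rho> ^ j)"
      by (simp add: sum_distrib_left power_add algebra_simps)
    also have "\<dots> \<le> reward_bound * C * \<rho> ^ n * (1 / (1 - \<rho>))"
      using geometric_sum_less[OF C(2,3), of "{..<m}"] reward_bound_nonneg C
      by (intro mult_left_mono) auto
    also have "\<dots> = B * \<rho> ^ n" unfolding B_def by simp
    finally show ?thesis .
  qed
  have "\<bar>mean_return (n + m) \<pi> - mean_return n \<pi>\<bar> \<le> B * \<rho> ^ n" if \<pi>: "\<pi> \<in> HR_policies" for \<pi> n m
  proof -
    have "\<bar>mean_return (n + m) \<pi> - mean_return n \<pi>\<bar> \<le>
        (\<Sum>s\<in>{1..Suc S}. \<mu> s * \<bar>expected_return (n + m) \<pi> s - expected_return n \<pi> s\<bar>)"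
      unfolding mean_return_eq sum_subtractf[symmetric] right_diff_distrib[symmetric]
      using mu_nonneg by (simp add: order_trans[OF sum_abs] abs_mult)
    also have "\<dots> \<le> (\<Sum>s\<in>{1..Suc S}. \<mu> s * (B * \<rho> ^ n))"
      using mu_nonneg state[OF \<pi>] by (intro sum_mono mult_left_mono) auto
    also have "\<dots> = B * \<rho> ^ n" using mu_sum by (simp add: sum_distrib_right[symmetric])
    finally show ?thesis .
  qed
  then show ?thesis using C by blast
qed

lemma mean_return_bounded: "\<exists>B. \<forall>\<pi>\<in>HR_policies. \<forall>n. \<bar>mean_return n \<pi>\<bar> \<le> B"
proof -
  obtain B \<rho> where "\<forall>\<pi>\<in>HR_policies. \<forall>n m. \<bar>mean_return (n + m) \<pi> - mean_return n \<pi>\<bar> \<le> B * \<rho> ^ n"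
    using mean_return_increment_geometric by blast
  then have "\<forall>\<pi>\<in>HR_policies. \<forall>m. \<bar>mean_return m \<pi>\<bar> \<le> B"
    by (metis add_0 diff_zero mean_return_0 mult_1_right power_0)
  then show ?thesis ..
qed

lemma mean_return_convergent:
  assumes "\<pi> \<in> HR_policies"
  shows "convergent (\<lambda>n. mean_return n \<pi>)"
proof -
  obtain B \<rho> where "0 < \<rho>" "\<rho> < 1"
    "\<forall>\<pi>\<in>HR_policies. \<forall>n m. \<bar>mean_return (n + m) \<pi> - mean_return n \<pi>\<bar> \<le> B * \<rho> ^ n"
    using mean_return_increment_geometric by blast
  then show ?thesis using assms by (intro convergent_if_increments_geometric) auto
qed

definition exp_moment :: "real \<Rightarrow> nat \<Rightarrow> 'a policy \<Rightarrow> real" where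
  "exp_moment \<beta> n \<pi> = expect p S \<pi> \<mu> n (\<lambda>ss as. exp (- \<beta> * ret r n ss as))"

definition sink_mass :: "real \<Rightarrow> nat \<Rightarrow> 'a policy \<Rightarrow> real" where
  "sink_mass \<beta> n \<pi> = (\<Sum>s\<in>{1..Suc S}. \<mu> s * tilted_expect \<beta> sink_ind n \<pi> s)"

definition transient_mass :: "real \<Rightarrow> nat \<Rightarrow> 'a policy \<Rightarrow> real" where
  "transient_mass \<beta> n \<pi> = (\<Sum>s\<in>{1..Suc S}. \<mu> s * tilted_expect \<beta> transient_ind n \<pi> s)"

lemma exp_moment_eq: "exp_moment \<beta> n \<pi> = (\<Sum>s\<in>{1..Suc S}. \<mu> s * tilted_expect \<beta> (\<lambda>_. 1) n \<pi> s)"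
  unfolding exp_moment_def tilted_expect_def by (simp add: expect_mixture[of p S \<pi> \<mu>])

lemma exp_moment_split: "exp_moment \<beta> n \<pi> = transient_mass \<beta> n \<pi> + sink_mass \<beta> n \<pi>"
  unfolding exp_moment_eq tilted_expect_split transient_mass_def sink_mass_def
  by (simp add: distrib_left sum.distrib)

lemma erm_eq_exp_moment: "0 < \<beta> \<Longrightarrow> erm p S \<pi> \<mu> n \<beta> (ret r n) = - (1 / \<beta>) * ln (exp_moment \<beta> n \<pi>)"
  unfolding erm_def exp_moment_def by simp

lemma exp_moment_lower_bound:
  assumes "0 < \<beta>"
  obtains c where "0 < c" "\<And>\<pi> n. \<pi> \<in> HR_policies \<Longrightarrow> c \<le> exp_moment \<beta> n \<pi>"
proof -
  obtain B where B: "\<forall>\<pi>\<in>HR_policies. \<forall>n. \<bar>mean_return n \<pi>\<bar> \<le> B" using mean_return_bounded by blast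
  show ?thesis
  proof (rule that)
    fix \<pi> :: "'a policy" and n
    assume \<pi>: "\<pi> \<in> HR_policies"
    have "exp (- \<beta> * B) \<le> exp (- \<beta> * mean_return n \<pi>)" using B \<pi> assms by (simp add: abs_le_iff)
    also have "\<dots> \<le> exp_moment \<beta> n \<pi>"
      unfolding mean_return_def exp_moment_def by (rule exp_expect_le_expect_exp[OF \<pi>])
    finally show "exp (- \<beta> * B) \<le> exp_moment \<beta> n \<pi>" .
  qed simp
qed

lemma incseq_sink_mass: "\<pi> \<in> HR_policies \<Longrightarrow> incseq (\<lambda>n. sink_mass \<beta> n \<pi>)"
  unfolding sink_mass_def incseq_def
  using mu_nonneg incseq_tilted_expect_sink by (auto intro!: sum_mono mult_left_mono simp: incseq_def)

lemma transient_mass_nonneg: "\<pi> \<in> HR_policies \<Longrightarrow> 0 \<le> transient_mass \<beta> n \<pi>"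
  unfolding transient_mass_def using mu_nonneg tilted_expect_transient_nonneg
  by (intro sum_nonneg mult_nonneg_nonneg) auto

lemma transient_mass_le_sink_increment:
  "\<exists>K c. 0 < c \<and> (\<forall>\<pi>\<in>HR_policies. \<forall>n.
     transient_mass \<beta> n \<pi> \<le> (1 / c) * (sink_mass \<beta> (n + K) \<pi> - sink_mass \<beta> n \<pi>))"
proof -
  obtain K c where Kc: "0 < c" "\<forall>\<pi>\<in>HR_policies. \<forall>s\<in>{1..Suc S}. c \<le> tilted_expect \<beta> sink_ind K \<pi> s"
    using uniform_absorption[of \<beta>] by blast
  have "transient_mass \<beta> n \<pi> \<le> (1 / c) * (sink_mass \<beta> (n + K) \<pi> - sink_mass \<beta> n \<pi>)"
    if \<pi>: "\<pi> \<in> HR_policies" for \<pi> n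
  proof -
    have "transient_mass \<beta> n \<pi> \<le> (\<Sum>s\<in>{1..Suc S}. \<mu> s * ((1 / c) *
        (tilted_expect \<beta> sink_ind (n + K) \<pi> s - tilted_expect \<beta> sink_ind n \<pi> s)))"
      unfolding transient_mass_def using mu_nonneg transient_le_sink_increment[OF Kc \<pi>]
      by (intro sum_mono mult_left_mono) auto
    also have "\<dots> = (1 / c) * (sink_mass \<beta> (n + K) \<pi> - sink_mass \<beta> n \<pi>)"
      unfolding sink_mass_def by (simp add: sum_distrib_left sum_subtractf algebra_simps)
    finally show ?thesis .
  qed
  then show ?thesis using Kc(1) by blast
qed

lemma transient_mass_tendsto_0:
  assumes "\<pi> \<in> HR_policies" "bdd_above (range (\<lambda>n. sink_mass \<beta> n \<pi>))"
  shows "(\<lambda>n. transient_mass \<beta> n \<pi>) \<longlonglongrightarrow> 0"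
proof -
  obtain K c where K: "\<forall>\<pi>\<in>HR_policies. \<forall>n.
      transient_mass \<beta> n \<pi> \<le> (1 / c) * (sink_mass \<beta> (n + K) \<pi> - sink_mass \<beta> n \<pi>)"
    using transient_mass_le_sink_increment by blast
  show ?thesis
    by (rule tendsto_zero_if_le_increment[OF incseq_sink_mass[OF assms(1)] assms(2)
          transient_mass_nonneg[OF assms(1)]]) (use K assms(1) in blast)
qed

lemma exp_moment_convergent_or_at_top:
  assumes \<pi>: "\<pi> \<in> HR_policies"
  shows "convergent (\<lambda>n. exp_moment \<beta> n \<pi>) \<or> filterlim (\<lambda>n. exp_moment \<beta> n \<pi>) at_top sequentially"
proof (cases "bdd_above (range (\<lambda>n. sink_mass \<beta> n \<pi>))")
  case True
  then have "(\<lambda>n. sink_mass \<beta> n \<pi>) \<longlonglongrightarrow> (SUP n. sink_mass \<beta> n \<pi>)"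
    using incseq_sink_mass[OF \<pi>] by (intro LIMSEQ_incseq_SUP)
  then have "(\<lambda>n. exp_moment \<beta> n \<pi>) \<longlonglongrightarrow> 0 + (SUP n. sink_mass \<beta> n \<pi>)"
    unfolding exp_moment_split by (intro tendsto_add transient_mass_tendsto_0[OF \<pi> True])
  then show ?thesis by (auto simp: convergent_def)
next
  case False
  have "filterlim (\<lambda>n. sink_mass \<beta> n \<pi>) at_top sequentially"
    unfolding filterlim_at_top
  proof
    fix Z :: real
    obtain N where "Z \<le> sink_mass \<beta> N \<pi>"
      using False by (metis bdd_above.I2 nle_le)
    then show "\<forall>\<^sub>F n in sequentially. Z \<le> sink_mass \<beta> n \<pi>"
      using incseq_sink_mass[OF \<pi>] unfolding eventually_sequentially incseq_def
      by (meson order_trans)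
  qed
  then have "filterlim (\<lambda>n. exp_moment \<beta> n \<pi>) at_top sequentially"
    by (rule filterlim_at_top_mono) (simp add: exp_moment_split transient_mass_nonneg[OF \<pi>])
  then show ?thesis by blast
qed

lemma erm_convergent:
  assumes \<pi>: "\<pi> \<in> HR_policies" and b: "0 < \<beta>"
  shows "convergent (\<lambda>t. ereal (erm p S \<pi> \<mu> (Suc t) \<beta> (ret r (Suc t))))"
proof -
  obtain c where c: "0 < c" "\<And>n. c \<le> exp_moment \<beta> n \<pi>"
    using exp_moment_lower_bound[OF b] \<pi> by metis
  consider L where "(\<lambda>n. exp_moment \<beta> n \<pi>) \<longlonglongrightarrow> L"
    | "filterlim (\<lambda>n. exp_moment \<beta> n \<pi>) at_top sequentially"
    using exp_moment_convergent_or_at_top[OF \<pi>, of \<beta>] by (auto simp: convergent_def)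
  then show ?thesis
  proof cases
    case (1 L)
    then have "c \<le> L" using c by (intro LIMSEQ_le_const) auto
    then have "(\<lambda>t. - (1 / \<beta>) * ln (exp_moment \<beta> (Suc t) \<pi>)) \<longlonglongrightarrow> - (1 / \<beta>) * ln L"
      using LIMSEQ_Suc[OF 1] c(1) by (intro tendsto_intros) auto
    then show ?thesis using b by (auto simp: erm_eq_exp_moment convergent_def)
  next
    case 2
    then have "filterlim (\<lambda>t. (1 / \<beta>) * ln (exp_moment \<beta> (Suc t) \<pi>)) at_top sequentially"
      using b by (intro filterlim_tendsto_pos_mult_at_top[OF tendsto_const]
          filterlim_compose[OF ln_at_top] filterlim_compose[OF 2 filterlim_Suc]) auto
    then have "filterlim (\<lambda>t. - (1 / \<beta>) * ln (exp_moment \<beta> (Suc t) \<pi>)) at_bot sequentially"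
      by (simp add: filterlim_uminus_at_bot)
    then have "((ereal \<circ> (\<lambda>t. - (1 / \<beta>) * ln (exp_moment \<beta> (Suc t) \<pi>))) \<longlonglongrightarrow> - \<infinity>)"
      by (simp only: ereal_tendsto_simps2)
    then show ?thesis using b by (auto simp: erm_eq_exp_moment comp_def convergent_def)
  qed
qed

end

section \<open>The grid of risk parameters\<close>

lemma beta_grid_pos:
  assumes "0 < \<alpha>" "\<alpha> < 1" "0 < \<delta>" "\<gamma> \<in> beta_grid \<alpha> \<gamma>0 \<delta>"
  shows "0 < \<gamma>"
proof -
  have "ln \<alpha> < 0" using assms by simp
  then show ?thesis using assms(3,4) unfolding beta_grid_def by (auto simp: divide_pos_neg divide_neg_pos)
qed

lemma beta_grid_base: "0 < \<gamma>0 \<Longrightarrow> \<gamma>0 < - ln \<alpha> / \<delta> \<Longrightarrow> \<gamma>0 \<in> beta_grid \<alpha> \<gamma>0 \<delta>"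
  unfolding beta_grid_def by (auto intro!: exI[of _ 0])

lemma finite_beta_grid:
  assumes "0 < \<alpha>" "\<alpha> < 1" "0 < \<delta>"
  shows "finite (beta_grid \<alpha> \<gamma>0 \<delta>)"
proof -
  have lna: "ln \<alpha> < 0" using assms by simp
  define c where "c = \<delta> / - ln \<alpha>"
  have c: "0 < c" using assms(3) lna unfolding c_def by (simp add: divide_pos_neg)
  have kc: "real k * \<delta> / ln \<alpha> = - (real k * c)" for k unfolding c_def using lna by simp
  define N where "N = nat \<lceil>(1 / \<gamma>0) / c\<rceil>"
  have "k < N" if "0 < 1 / \<gamma>0 - real k * c" for k
  proof -
    have "real k * c < 1 / \<gamma>0" using that by simp
    then have "real k < (1 / \<gamma>0) / c" using c by (metis mult.commute pos_less_divide_eq)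
    then show ?thesis unfolding N_def by linarith
  qed
  then have "beta_grid \<alpha> \<gamma>0 \<delta> \<subseteq> (\<lambda>k. 1 / (1 / \<gamma>0 + real k * \<delta> / ln \<alpha>)) ` {..<N} \<union> {- ln \<alpha> / \<delta>}"
    unfolding beta_grid_def kc by auto
  then show ?thesis by (rule finite_subset) auto
qed

lemma beta_grid_memI:
  assumes a: "0 < \<alpha>" "\<alpha> < 1" and d: "0 < \<delta>"
    and k: "\<delta> / - ln \<alpha> < 1 / \<gamma>0 - real k * (\<delta> / - ln \<alpha>)"
  shows "1 / (1 / \<gamma>0 - real k * (\<delta> / - ln \<alpha>)) \<in> beta_grid \<alpha> \<gamma>0 \<delta>"
proof -
  define c where "c = \<delta> / - ln \<alpha>"
  have c: "0 < c" unfolding c_def using a d by (simp add: divide_pos_neg)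
  have kc: "c < 1 / \<gamma>0 - real k * c" using k unfolding c_def .
  have "1 / (1 / \<gamma>0 - real k * c) < 1 / c"
    using kc c by (intro divide_strict_left_mono) auto
  moreover have "1 / c = - ln \<alpha> / \<delta>" "real k * \<delta> / ln \<alpha> = - (real k * c)"
    unfolding c_def by simp_all
  ultimately show ?thesis
    using kc c unfolding c_def[symmetric] beta_grid_def by (auto intro!: exI[of _ k])
qed

text \<open>The reciprocals of consecutive grid points differ by \<open>\<delta> / (-ln \<alpha>)\<close>.\<close>

lemma beta_grid_below:
  assumes a: "0 < \<alpha>" "\<alpha> < 1" and d: "0 < \<delta>" and g0: "0 < \<gamma>0" "\<gamma>0 < - ln \<alpha> / \<delta>"
    and b: "\<gamma>0 < \<beta>"
  shows "\<exists>\<gamma>\<in>beta_grid \<alpha> \<gamma>0 \<delta>. \<gamma> \<le> \<beta> \<and> ln \<alpha> / \<beta> \<le> ln \<alpha> / \<gamma> + \<delta>"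
proof -
  define L where "L = - ln \<alpha>"
  have L: "0 < L" and lnL: "ln \<alpha> = - L" using a unfolding L_def by simp_all
  define c where "c = \<delta> / L"
  have c: "0 < c" using L d unfolding c_def by simp
  show ?thesis
  proof (cases "L / \<delta> \<le> \<beta>")
    case True
    have "L / \<delta> \<in> beta_grid \<alpha> \<gamma>0 \<delta>" unfolding beta_grid_def L_def by simp
    moreover have "ln \<alpha> / (L / \<delta>) = - \<delta>" using L d unfolding lnL by simp
    moreover have "ln \<alpha> / \<beta> \<le> 0" using b g0 L unfolding lnL by simp
    ultimately show ?thesis using True by force
  next
    case False
    define u where "u = 1 / \<beta>"
    have uc: "c < u" using False L d b g0 unfolding u_def c_def by (simp add: field_simps)
    have uu0: "u < 1 / \<gamma>0" using b g0 unfolding u_def by (simp add: field_simps)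
    define k where "k = nat \<lfloor>(1 / \<gamma>0 - u) / c\<rfloor>"
    have "real k \<le> (1 / \<gamma>0 - u) / c" "(1 / \<gamma>0 - u) / c < real k + 1"
      using uu0 c unfolding k_def by simp linarith
    then have k1: "real k * c \<le> 1 / \<gamma>0 - u" and k2: "1 / \<gamma>0 - u < (real k + 1) * c"
      using c by (simp_all add: field_simps)
    define \<gamma> where "\<gamma> = 1 / (1 / \<gamma>0 - real k * c)"
    have "\<gamma> \<in> beta_grid \<alpha> \<gamma>0 \<delta>"
      unfolding \<gamma>_def c_def L_def using k1 uc beta_grid_memI[OF a d, of \<gamma>0 k]
      by (simp add: c_def L_def)
    moreover have "\<gamma> \<le> \<beta>"
    proof -
      have "1 / (1 / \<gamma>0 - real k * c) \<le> 1 / u" using k1 uc c by (intro divide_left_mono) auto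
      then show ?thesis unfolding \<gamma>_def u_def by simp
    qed
    moreover have "ln \<alpha> / \<beta> \<le> ln \<alpha> / \<gamma> + \<delta>"
    proof -
      have "L * (1 / \<gamma>0 - real k * c - u) \<le> L * c"
        using k2 L by (intro mult_left_mono) (auto simp: algebra_simps)
      then show ?thesis unfolding lnL \<gamma>_def u_def c_def using L by (simp add: algebra_simps)
    qed
    ultimately show ?thesis by blast
  qed
qed

lemma beta_grid_approx:
  fixes f :: "real \<Rightarrow> real"
  assumes a: "0 < \<alpha>" "\<alpha> < 1" and d: "0 < \<delta>" and g0: "0 < \<gamma>0" "\<gamma>0 < - ln \<alpha> / \<delta>"
    and antimono: "\<And>x y. 0 \<le> x \<Longrightarrow> x \<le> y \<Longrightarrow> f y \<le> f x" and b: "0 < \<beta>"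
  shows "f \<beta> + ln \<alpha> / \<beta> \<le> f 0 + ln \<alpha> / \<gamma>0 \<or>
    (\<exists>\<gamma>\<in>beta_grid \<alpha> \<gamma>0 \<delta>. f \<beta> + ln \<alpha> / \<beta> \<le> f \<gamma> + ln \<alpha> / \<gamma> + \<delta>)"
proof (cases "\<beta> \<le> \<gamma>0")
  case True
  have "ln \<alpha> / \<beta> \<le> ln \<alpha> / \<gamma>0"
    using True b a by (simp add: divide_le_eq_1 frac_le field_simps)
  then show ?thesis using antimono[of 0 \<beta>] b by simp
next
  case False
  then have "\<gamma>0 < \<beta>" by simp
  then obtain \<gamma> where "\<gamma> \<in> beta_grid \<alpha> \<gamma>0 \<delta>" "\<gamma> \<le> \<beta>" "ln \<alpha> / \<beta> \<le> ln \<alpha> / \<gamma> + \<delta>"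
    using beta_grid_below[OF a d g0] by blast
  moreover have "0 < \<gamma>" using beta_grid_pos[OF a d] \<open>\<gamma> \<in> beta_grid \<alpha> \<gamma>0 \<delta>\<close> by blast
  ultimately show ?thesis using antimono[of \<gamma> \<beta>] by force
qed

lemma eventually_less_of_limsup:
  fixes g :: "nat \<Rightarrow> real" and H :: ereal
  assumes "limsup (\<lambda>t. ereal (g t)) + ereal c \<le> H" "H < ereal w"
  shows "eventually (\<lambda>t. g t + c < w) sequentially"
proof -
  have "limsup (\<lambda>t. ereal (g t)) < ereal (w - c)"
    using assms by (cases "limsup (\<lambda>t. ereal (g t))"; cases H) auto
  from Limsup_lessD[OF this] show ?thesis by eventually_elim simp
qed

text \<open>Up to \<open>\<delta>\<close>, the supremum over \<open>\<beta> > 0\<close> is attained on the grid or bounded by the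
  value at \<open>\<beta> = 0\<close>.\<close>

lemma limsup_Sup_entropic_le:
  fixes f :: "nat \<Rightarrow> real \<Rightarrow> real" and H :: ereal
  assumes a: "0 < \<alpha>" "\<alpha> < 1" and d: "0 < \<delta>" and g0: "0 < \<gamma>0" "\<gamma>0 < - ln \<alpha> / \<delta>"
    and antimono: "\<And>t x y. 0 \<le> x \<Longrightarrow> x \<le> y \<Longrightarrow> f t y \<le> f t x"
    and grid: "\<And>\<gamma>. \<gamma> \<in> beta_grid \<alpha> \<gamma>0 \<delta> \<Longrightarrow> limsup (\<lambda>t. ereal (f t \<gamma>)) + ereal (ln \<alpha> / \<gamma> + \<delta>) \<le> H"
    and zero: "limsup (\<lambda>t. ereal (f t 0)) + ereal (ln \<alpha> / \<gamma>0) \<le> H"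
  shows "limsup (\<lambda>t. ereal (Sup ((\<lambda>\<beta>. f t \<beta> + ln \<alpha> / \<beta>) ` {0<..}))) \<le> H"
proof (rule dense_ge)
  fix x
  assume Hx: "H < x"
  show "limsup (\<lambda>t. ereal (Sup ((\<lambda>\<beta>. f t \<beta> + ln \<alpha> / \<beta>) ` {0<..}))) \<le> x"
  proof (cases x)
    case (real w)
    have "eventually (\<lambda>t. \<forall>\<gamma>\<in>beta_grid \<alpha> \<gamma>0 \<delta>. f t \<gamma> + (ln \<alpha> / \<gamma> + \<delta>) < w) sequentially"
      using grid Hx real by (intro eventually_ball_finite finite_beta_grid[OF a d] ballI
          eventually_less_of_limsup) auto
    moreover have "eventually (\<lambda>t. f t 0 + ln \<alpha> / \<gamma>0 < w) sequentially"
      using zero Hx real by (intro eventually_less_of_limsup) auto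
    ultimately have "eventually (\<lambda>t. Sup ((\<lambda>\<beta>. f t \<beta> + ln \<alpha> / \<beta>) ` {0<..}) \<le> w) sequentially"
    proof eventually_elim
      case (elim t)
      show ?case
      proof (rule cSup_least)
        fix y
        assume "y \<in> (\<lambda>\<beta>. f t \<beta> + ln \<alpha> / \<beta>) ` {0<..}"
        then obtain \<beta> where b: "0 < \<beta>" "y = f t \<beta> + ln \<alpha> / \<beta>" by auto
        have "f t \<beta> + ln \<alpha> / \<beta> \<le> f t 0 + ln \<alpha> / \<gamma>0 \<or>
            (\<exists>\<gamma>\<in>beta_grid \<alpha> \<gamma>0 \<delta>. f t \<beta> + ln \<alpha> / \<beta> \<le> f t \<gamma> + ln \<alpha> / \<gamma> + \<delta>)"
          by (rule beta_grid_approx[OF a d g0 antimono b(1)])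
        then show "y \<le> w" using elim b(2) by force
      qed auto
    qed
    then show ?thesis unfolding real by (intro Limsup_bounded) (auto elim: eventually_mono)
  qed (use Hx in auto)
qed

lemma le_Sup_entropic:
  fixes g :: "real \<Rightarrow> real"
  assumes a: "0 < \<alpha>" "\<alpha> < 1" and antimono: "\<And>x y. 0 \<le> x \<Longrightarrow> x \<le> y \<Longrightarrow> g y \<le> g x"
    and b: "0 < \<beta>"
  shows "g \<beta> + ln \<alpha> / \<beta> \<le> Sup ((\<lambda>\<beta>. g \<beta> + ln \<alpha> / \<beta>) ` {0<..})"
proof -
  have "g \<beta>' + ln \<alpha> / \<beta>' \<le> g 0" if "0 < \<beta>'" for \<beta>'
  proof -
    have "ln \<alpha> / \<beta>' < 0" using that a by (simp add: divide_neg_pos)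
    then show ?thesis using antimono[of 0 \<beta>'] that by simp
  qed
  then show ?thesis using b by (intro cSup_upper bdd_aboveI[of _ "g 0"]) auto
qed

lemma SUP_lim_le_liminf_Sup_entropic:
  fixes f :: "nat \<Rightarrow> real \<Rightarrow> real"
  assumes a: "0 < \<alpha>" "\<alpha> < 1"
    and antimono: "\<And>t x y. 0 \<le> x \<Longrightarrow> x \<le> y \<Longrightarrow> f t y \<le> f t x"
    and F: "\<And>\<beta>. 0 < \<beta> \<Longrightarrow> (\<lambda>t. ereal (f t \<beta>)) \<longlonglongrightarrow> F \<beta>"
  shows "(SUP \<beta>\<in>{0<..}. F \<beta> + ereal (ln \<alpha> / \<beta>)) \<le>
    liminf (\<lambda>t. ereal (Sup ((\<lambda>\<beta>. f t \<beta> + ln \<alpha> / \<beta>) ` {0<..})))"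
proof (rule SUP_least)
  fix \<beta> :: real
  assume "\<beta> \<in> {0<..}"
  then have b: "0 < \<beta>" by simp
  have "F \<beta> + ereal (ln \<alpha> / \<beta>) = liminf (\<lambda>t. ereal (f t \<beta>)) + ereal (ln \<alpha> / \<beta>)"
    using lim_imp_Liminf[OF trivial_limit_sequentially F[OF b]] by simp
  also have "\<dots> = liminf (\<lambda>t. ereal (f t \<beta>) + ereal (ln \<alpha> / \<beta>))"
    by (rule Liminf_add_ereal_right[symmetric]) auto
  also have "\<dots> \<le> liminf (\<lambda>t. ereal (Sup ((\<lambda>\<beta>. f t \<beta> + ln \<alpha> / \<beta>) ` {0<..})))"
  proof (intro Liminf_mono always_eventually allI)
    fix t
    have "f t \<beta> + ln \<alpha> / \<beta> \<le> Sup ((\<lambda>\<beta>. f t \<beta> + ln \<alpha> / \<beta>) ` {0<..})"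
      by (rule le_Sup_entropic[OF a antimono b])
    then show "ereal (f t \<beta>) + ereal (ln \<alpha> / \<beta>) \<le> ereal (Sup ((\<lambda>\<beta>. f t \<beta> + ln \<alpha> / \<beta>) ` {0<..}))"
      by simp
  qed
  finally show "F \<beta> + ereal (ln \<alpha> / \<beta>) \<le> liminf (\<lambda>t. ereal (Sup ((\<lambda>\<beta>. f t \<beta> + ln \<alpha> / \<beta>) ` {0<..})))" .
qed

text \<open>Take the grid with mesh \<open>\<epsilon>\<close> and with \<open>\<gamma>0\<close> so small that \<open>ln \<alpha> / \<gamma>0\<close> pushes the value
  at \<open>\<beta> = 0\<close> below the target.\<close>

lemma limsup_Sup_entropic_le_SUP_lim:
  fixes f :: "nat \<Rightarrow> real \<Rightarrow> real"
  assumes a: "0 < \<alpha>" "\<alpha> < 1"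
    and antimono: "\<And>t x y. 0 \<le> x \<Longrightarrow> x \<le> y \<Longrightarrow> f t y \<le> f t x"
    and F: "\<And>\<beta>. 0 < \<beta> \<Longrightarrow> (\<lambda>t. ereal (f t \<beta>)) \<longlonglongrightarrow> F \<beta>"
    and F0: "(\<lambda>t. f t 0) \<longlonglongrightarrow> F0"
  shows "limsup (\<lambda>t. ereal (Sup ((\<lambda>\<beta>. f t \<beta> + ln \<alpha> / \<beta>) ` {0<..}))) \<le>
    (SUP \<beta>\<in>{0<..}. F \<beta> + ereal (ln \<alpha> / \<beta>))"
proof (rule ereal_le_real, rule ereal_le_epsilon2)
  fix z \<epsilon> :: real
  assume z: "(SUP \<beta>\<in>{0<..}. F \<beta> + ereal (ln \<alpha> / \<beta>)) \<le> ereal z" and e: "0 < \<epsilon>"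
  define L where "L = - ln \<alpha>"
  define \<gamma>0 where "\<gamma>0 = L / (\<bar>F0 - z\<bar> + \<epsilon> + 1)"
  have L: "0 < L" using a unfolding L_def by simp
  have g0: "0 < \<gamma>0" "\<gamma>0 < - ln \<alpha> / \<epsilon>"
    unfolding \<gamma>0_def L_def[symmetric] using L e
    by (simp_all add: add_pos_nonneg divide_strict_left_mono)
  have "limsup (\<lambda>t. ereal (Sup ((\<lambda>\<beta>. f t \<beta> + ln \<alpha> / \<beta>) ` {0<..}))) \<le> ereal (z + \<epsilon>)"
  proof (rule limsup_Sup_entropic_le[OF a e g0 antimono])
    fix \<gamma>
    assume "\<gamma> \<in> beta_grid \<alpha> \<gamma>0 \<epsilon>"
    then have "0 < \<gamma>" by (rule beta_grid_pos[OF a e])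
    then have "F \<gamma> + ereal (ln \<alpha> / \<gamma>) \<le> ereal z"
      using z by (meson SUP_upper greaterThan_iff order_trans)
    then show "limsup (\<lambda>t. ereal (f t \<gamma>)) + ereal (ln \<alpha> / \<gamma> + \<epsilon>) \<le> ereal (z + \<epsilon>)"
      using lim_imp_Limsup[OF trivial_limit_sequentially F[OF \<open>0 < \<gamma>\<close>]]
      by (cases "F \<gamma>") auto
  next
    have "ln \<alpha> / \<gamma>0 = - (\<bar>F0 - z\<bar> + \<epsilon> + 1)"
      unfolding \<gamma>0_def using L unfolding L_def by simp
    then show "limsup (\<lambda>t. ereal (f t 0)) + ereal (ln \<alpha> / \<gamma>0) \<le> ereal (z + \<epsilon>)"
      using lim_imp_Limsup[OF trivial_limit_sequentially F0[THEN tendsto_ereal]] e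
      by (auto simp: abs_if)
  qed
  then show "limsup (\<lambda>t. ereal (Sup ((\<lambda>\<beta>. f t \<beta> + ln \<alpha> / \<beta>) ` {0<..}))) \<le> ereal z + ereal \<epsilon>"
    by simp
qed

lemma convergent_Sup_entropic:
  fixes f :: "nat \<Rightarrow> real \<Rightarrow> real"
  assumes a: "0 < \<alpha>" "\<alpha> < 1"
    and antimono: "\<And>t x y. 0 \<le> x \<Longrightarrow> x \<le> y \<Longrightarrow> f t y \<le> f t x"
    and conv: "\<And>\<beta>. 0 < \<beta> \<Longrightarrow> convergent (\<lambda>t. ereal (f t \<beta>))"
    and conv0: "convergent (\<lambda>t. f t 0)"
  shows "convergent (\<lambda>t. ereal (Sup ((\<lambda>\<beta>. f t \<beta> + ln \<alpha> / \<beta>) ` {0<..})))"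
proof -
  define F where "F \<beta> = lim (\<lambda>t. ereal (f t \<beta>))" for \<beta>
  have F: "(\<lambda>t. ereal (f t \<beta>)) \<longlonglongrightarrow> F \<beta>" if "0 < \<beta>" for \<beta>
    using conv[OF that] unfolding F_def by (simp add: convergent_LIMSEQ_iff)
  obtain F0 where F0: "(\<lambda>t. f t 0) \<longlonglongrightarrow> F0" using conv0 by (auto simp: convergent_def)
  have "limsup (\<lambda>t. ereal (Sup ((\<lambda>\<beta>. f t \<beta> + ln \<alpha> / \<beta>) ` {0<..}))) \<le>
      liminf (\<lambda>t. ereal (Sup ((\<lambda>\<beta>. f t \<beta> + ln \<alpha> / \<beta>) ` {0<..})))"
    using limsup_Sup_entropic_le_SUP_lim[where f = f and F = F, OF a antimono F F0]
      SUP_lim_le_liminf_Sup_entropic[where f = f and F = F, OF a antimono F]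
    by (rule order_trans)
  then show ?thesis
    unfolding convergent_ereal
    using Liminf_le_Limsup[of sequentially "\<lambda>t. ereal (Sup ((\<lambda>\<beta>. f t \<beta> + ln \<alpha> / \<beta>) ` {0<..}))"]
    by (intro order_antisym) simp_all
qed

section \<open>Optimal stationary deterministic policies\<close>

lemma finite_frequently_choice:
  fixes P :: "'b::finite \<Rightarrow> nat \<Rightarrow> bool"
  assumes "\<And>N. \<exists>a. P a N"
  shows "\<exists>a. \<forall>N. \<exists>N'\<ge>N. P a N'"
proof (rule ccontr)
  assume "\<nexists>a. \<forall>N. \<exists>N'\<ge>N. P a N'"
  then have "\<forall>a. \<exists>N. \<forall>N'\<ge>N. \<not> P a N'" by auto
  then obtain M where M: "\<And>a N'. M a \<le> N' \<Longrightarrow> \<not> P a N'" by metis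
  have "M a \<le> Max (range M)" for a by (rule Max_ge) auto
  then show False using assms[of "Max (range M)"] M by blast
qed

lemma limsup_neg_ln_le:
  fixes x :: "nat \<Rightarrow> real"
  assumes b: "0 < \<beta>" and x: "\<And>n. 0 < x n" and L: "0 < L" "ereal L \<le> liminf (\<lambda>n. ereal (x n))"
  shows "limsup (\<lambda>t. ereal (- (1 / \<beta>) * ln (x (Suc t)))) \<le> ereal (- (1 / \<beta>) * ln L)"
proof (rule ereal_le_epsilon2)
  fix \<epsilon> :: real
  assume e: "0 < \<epsilon>"
  have "ereal (L * exp (- \<beta> * \<epsilon>)) < liminf (\<lambda>n. ereal (x n))"
    using L b e by (intro order_less_le_trans[OF _ L(2)]) (simp add: mult_less_cancel_left1)
  then have "eventually (\<lambda>n. L * exp (- \<beta> * \<epsilon>) < x n) sequentially"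
    by (auto dest: less_LiminfD)
  then have "eventually (\<lambda>t. L * exp (- \<beta> * \<epsilon>) < x (Suc t)) sequentially"
    by (rule eventually_sequentially_Suc[THEN iffD2])
  then have "eventually (\<lambda>t. ereal (- (1 / \<beta>) * ln (x (Suc t))) \<le> ereal (- (1 / \<beta>) * ln L + \<epsilon>)) sequentially"
  proof eventually_elim
    case (elim t)
    then have "ln (L * exp (- \<beta> * \<epsilon>)) < ln (x (Suc t))"
      using L(1) x by (subst ln_less_cancel_iff) auto
    then have "ln L - \<beta> * \<epsilon> < ln (x (Suc t))"
      using L(1) by (simp add: ln_mult)
    then show ?case using b by (simp add: field_simps)
  qed
  then show "limsup (\<lambda>t. ereal (- (1 / \<beta>) * ln (x (Suc t)))) \<le> ereal (- (1 / \<beta>) * ln L) + ereal \<epsilon>"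
    by (auto intro: Limsup_bounded)
qed

lemma liminf_neg_ln_ge:
  fixes x :: "nat \<Rightarrow> real"
  assumes b: "0 < \<beta>" and x: "\<And>n. 0 < x n" and V: "0 < V"
    and ev: "\<And>\<eta>. 0 < \<eta> \<Longrightarrow> eventually (\<lambda>n. x n < V + \<eta>) sequentially"
  shows "ereal (- (1 / \<beta>) * ln V) \<le> liminf (\<lambda>t. ereal (- (1 / \<beta>) * ln (x (Suc t))))"
proof (rule ereal_le_epsilon2)
  fix \<epsilon> :: real
  assume e: "0 < \<epsilon>"
  have "V < V * exp (\<beta> * \<epsilon>)" using V b e by simp
  then have "eventually (\<lambda>n. x n < V * exp (\<beta> * \<epsilon>)) sequentially"
    using ev[of "V * exp (\<beta> * \<epsilon>) - V"] by simp
  then have "eventually (\<lambda>t. x (Suc t) < V * exp (\<beta> * \<epsilon>)) sequentially"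
    by (rule eventually_sequentially_Suc[THEN iffD2])
  then have "eventually (\<lambda>t. ereal (- (1 / \<beta>) * ln V - \<epsilon>) \<le> ereal (- (1 / \<beta>) * ln (x (Suc t)))) sequentially"
  proof eventually_elim
    case (elim t)
    then have "ln (x (Suc t)) < ln (V * exp (\<beta> * \<epsilon>))"
      using V x by (subst ln_less_cancel_iff) auto
    then have "ln (x (Suc t)) < ln V + \<beta> * \<epsilon>"
      using V by (simp add: ln_mult)
    then have "(1 / \<beta>) * ln (x (Suc t)) \<le> (1 / \<beta>) * (ln V + \<beta> * \<epsilon>)"
      using b by (intro mult_left_mono) auto
    then show ?case using b by (simp add: distrib_left)
  qed
  then have "ereal (- (1 / \<beta>) * ln V - \<epsilon>) \<le> liminf (\<lambda>t. ereal (- (1 / \<beta>) * ln (x (Suc t))))"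
    by (rule Liminf_bounded)
  then show "ereal (- (1 / \<beta>) * ln V) \<le> liminf (\<lambda>t. ereal (- (1 / \<beta>) * ln (x (Suc t)))) + ereal \<epsilon>"
    by (cases "liminf (\<lambda>t. ereal (- (1 / \<beta>) * ln (x (Suc t))))") auto
qed

context transient_mdp_init
begin

text \<open>Value iteration for the risk-averse control problem: \<open>min_value \<beta> n s\<close> is the least
  \<open>n\<close>-step exponential moment that any policy can achieve from \<open>s\<close>.\<close>

definition bellman_min :: "real \<Rightarrow> (nat \<Rightarrow> real) \<Rightarrow> nat \<Rightarrow> real" where
  "bellman_min \<beta> w s = Min (range (\<lambda>a. \<Sum>s'\<in>{1..Suc S}. tilt \<beta> s a s' * w s'))"

definition min_value :: "real \<Rightarrow> nat \<Rightarrow> nat \<Rightarrow> real" where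
  "min_value \<beta> n = (bellman_min \<beta> ^^ n) (\<lambda>_. 1)"

definition min_moment :: "real \<Rightarrow> nat \<Rightarrow> real" where
  "min_moment \<beta> n = (\<Sum>s\<in>{1..Suc S}. \<mu> s * min_value \<beta> n s)"

lemma bellman_min_le: "bellman_min \<beta> w s \<le> (\<Sum>s'\<in>{1..Suc S}. tilt \<beta> s a s' * w s')"
  unfolding bellman_min_def by (rule Min_le) auto

lemma bellman_min_attained: "\<exists>a. bellman_min \<beta> w s = (\<Sum>s'\<in>{1..Suc S}. tilt \<beta> s a s' * w s')"
proof -
  have "bellman_min \<beta> w s \<in> range (\<lambda>a. \<Sum>s'\<in>{1..Suc S}. tilt \<beta> s a s' * w s')"
    unfolding bellman_min_def by (rule Min_in) auto
  then show ?thesis by auto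
qed

lemma bellman_min_mono:
  assumes "\<And>s'. s' \<in> {1..Suc S} \<Longrightarrow> u s' \<le> w s'" "s \<in> {1..Suc S}"
  shows "bellman_min \<beta> u s \<le> bellman_min \<beta> w s"
proof -
  obtain a where a: "bellman_min \<beta> w s = (\<Sum>s'\<in>{1..Suc S}. tilt \<beta> s a s' * w s')"
    using bellman_min_attained by blast
  have "bellman_min \<beta> u s \<le> (\<Sum>s'\<in>{1..Suc S}. tilt \<beta> s a s' * u s')" by (rule bellman_min_le)
  also have "\<dots> \<le> (\<Sum>s'\<in>{1..Suc S}. tilt \<beta> s a s' * w s')"
    using assms tilt_nonneg[OF assms(2)] by (intro sum_mono mult_left_mono) auto
  finally show ?thesis using a by simp
qed

lemma bellman_min_sink: "bellman_min \<beta> w (Suc S) = w (Suc S)"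
  unfolding bellman_min_def by (simp only: sum_tilt_sink) simp

lemma min_value_0: "min_value \<beta> 0 = (\<lambda>_. 1)"
  unfolding min_value_def by simp

lemma min_value_Suc: "min_value \<beta> (Suc n) = bellman_min \<beta> (min_value \<beta> n)"
  unfolding min_value_def by simp

lemma min_value_sink: "min_value \<beta> n (Suc S) = 1"
  by (induction n) (simp_all add: min_value_0 min_value_Suc bellman_min_sink)

lemma min_value_pos: "s \<in> {1..Suc S} \<Longrightarrow> 0 < min_value \<beta> n s"
proof (induction n arbitrary: s)
  case 0
  then show ?case by (simp add: min_value_0)
next
  case (Suc n)
  obtain a where a: "bellman_min \<beta> (min_value \<beta> n) s = (\<Sum>s'\<in>{1..Suc S}. tilt \<beta> s a s' * min_value \<beta> n s')"
    using bellman_min_attained by blast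
  obtain s' where s': "s' \<in> {1..Suc S}" "0 < p s a s'" using exists_p_pos[OF Suc.prems] by blast
  have "0 < tilt \<beta> s a s' * min_value \<beta> n s'" using s' Suc.IH[OF s'(1)] by (simp add: tilt_def)
  also have "\<dots> \<le> (\<Sum>s'\<in>{1..Suc S}. tilt \<beta> s a s' * min_value \<beta> n s')"
    using s'(1) by (intro member_le_sum)
      (auto intro!: mult_nonneg_nonneg tilt_nonneg[OF Suc.prems] less_imp_le[OF Suc.IH])
  finally show ?case using a by (simp add: min_value_Suc)
qed

lemma min_value_le_tilted_expect:
  "\<pi> \<in> HR_policies \<Longrightarrow> s \<in> {1..Suc S} \<Longrightarrow> min_value \<beta> n s \<le> tilted_expect \<beta> (\<lambda>_. 1) n \<pi> s"
proof (induction n arbitrary: \<pi> s)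
  case 0
  then show ?case by (simp add: min_value_0 tilted_expect_0)
next
  case (Suc n)
  note \<pi> = Suc.prems(1) and \<pi>' = shift_policy_HR[OF Suc.prems(1)]
  have "min_value \<beta> (Suc n) s = (\<Sum>a\<in>UNIV. \<pi> [] s a * bellman_min \<beta> (min_value \<beta> n) s)"
    using HR_policies_sum[OF \<pi>] by (simp add: min_value_Suc sum_distrib_right[symmetric])
  also have "\<dots> \<le> (\<Sum>a\<in>UNIV. \<pi> [] s a * (\<Sum>s'\<in>{1..Suc S}. tilt \<beta> s a s' * min_value \<beta> n s'))"
    using HR_policies_nonneg[OF \<pi>] bellman_min_le by (intro sum_mono mult_left_mono) auto
  also have "\<dots> \<le> (\<Sum>a\<in>UNIV. \<pi> [] s a *
      (\<Sum>s'\<in>{1..Suc S}. tilt \<beta> s a s' * tilted_expect \<beta> (\<lambda>_. 1) n (shift_policy \<pi> s a) s'))"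
    using HR_policies_nonneg[OF \<pi>] tilt_nonneg[OF Suc.prems(2)] Suc.IH[OF \<pi>']
    by (intro sum_mono mult_left_mono) auto
  also have "\<dots> = tilted_expect \<beta> (\<lambda>_. 1) (Suc n) \<pi> s"
    using tilted_expect_Suc[OF Suc.prems(2)] by simp
  finally show ?case .
qed

lemma min_moment_le_exp_moment: "\<pi> \<in> HR_policies \<Longrightarrow> min_moment \<beta> n \<le> exp_moment \<beta> n \<pi>"
  unfolding min_moment_def exp_moment_eq using mu_nonneg min_value_le_tilted_expect
  by (intro sum_mono mult_left_mono) auto

lemma min_moment_pos: "0 < min_moment \<beta> n"
proof -
  have "\<exists>s\<in>{1..Suc S}. 0 < \<mu> s"
  proof (rule ccontr)
    assume "\<not> (\<exists>s\<in>{1..Suc S}. 0 < \<mu> s)"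
    then have "(\<Sum>s\<in>{1..Suc S}. \<mu> s) \<le> 0" by (intro sum_nonpos) (auto simp: not_less)
    then show False using mu_sum by simp
  qed
  then obtain s where s: "s \<in> {1..Suc S}" "0 < \<mu> s" by blast
  have "0 < \<mu> s * min_value \<beta> n s" using s min_value_pos by simp
  also have "\<dots> \<le> min_moment \<beta> n"
    unfolding min_moment_def using s(1)
    by (intro member_le_sum) (auto intro!: mult_nonneg_nonneg mu_nonneg less_imp_le[OF min_value_pos])
  finally show ?thesis .
qed

definition min_value_envelope :: "real \<Rightarrow> nat \<Rightarrow> nat \<Rightarrow> real" where
  "min_value_envelope \<beta> N s = Inf ((\<lambda>n. min_value \<beta> n s) ` {N..})"

lemma min_value_envelope_le:
  assumes "s \<in> {1..Suc S}" "N \<le> n"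
  shows "min_value_envelope \<beta> N s \<le> min_value \<beta> n s"
  unfolding min_value_envelope_def using assms min_value_pos[OF assms(1)]
  by (intro cInf_lower bdd_belowI[of _ 0]) (auto intro: less_imp_le)

lemma min_value_envelope_ge:
  "(\<And>n. N \<le> n \<Longrightarrow> z \<le> min_value \<beta> n s) \<Longrightarrow> z \<le> min_value_envelope \<beta> N s"
  unfolding min_value_envelope_def by (intro cInf_greatest) auto

lemma min_value_envelope_nonneg: "s \<in> {1..Suc S} \<Longrightarrow> 0 \<le> min_value_envelope \<beta> N s"
  using min_value_pos by (intro min_value_envelope_ge) (auto intro: less_imp_le)

lemma incseq_min_value_envelope:
  assumes "s \<in> {1..Suc S}"
  shows "incseq (\<lambda>N. min_value_envelope \<beta> N s)"
proof (rule incseq_SucI, rule min_value_envelope_ge)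
  fix N n
  assume "Suc N \<le> n"
  then show "min_value_envelope \<beta> N s \<le> min_value \<beta> n s"
    using min_value_envelope_le[OF assms, of N n] by simp
qed

lemma min_value_envelope_sink: "min_value_envelope \<beta> N (Suc S) = 1"
  unfolding min_value_envelope_def min_value_sink by simp

lemma bellman_min_envelope_le:
  assumes "s \<in> {1..Suc S}"
  shows "bellman_min \<beta> (min_value_envelope \<beta> N) s \<le> min_value_envelope \<beta> (Suc N) s"
proof (rule min_value_envelope_ge)
  fix n
  assume "Suc N \<le> n"
  then obtain m where m: "n = Suc m" "N \<le> m" by (cases n) auto
  have "bellman_min \<beta> (min_value_envelope \<beta> N) s \<le> bellman_min \<beta> (min_value \<beta> m) s"
    using min_value_envelope_le m(2) assms by (intro bellman_min_mono) auto
  then show "bellman_min \<beta> (min_value_envelope \<beta> N) s \<le> min_value \<beta> n s"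
    using m(1) by (simp add: min_value_Suc)
qed

lemma weighted_min_value_envelope_le:
  assumes L: "liminf (\<lambda>n. ereal (min_moment \<beta> n)) = ereal L"
  shows "(\<Sum>s\<in>{1..Suc S}. \<mu> s * min_value_envelope \<beta> N s) \<le> L"
proof -
  have "ereal (\<Sum>s\<in>{1..Suc S}. \<mu> s * min_value_envelope \<beta> N s) \<le> (INF n\<in>{N..}. ereal (min_moment \<beta> n))"
    unfolding min_moment_def using mu_nonneg min_value_envelope_le
    by (intro INF_greatest) (auto intro!: sum_mono mult_left_mono)
  also have "\<dots> \<le> liminf (\<lambda>n. ereal (min_moment \<beta> n))"
    unfolding liminf_SUP_INF by (rule SUP_upper) simp
  finally show ?thesis using L by simp
qed

text \<open>Positivity of the initial distribution on transient states keeps the envelope bounded.\<close>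

lemma min_value_envelope_tendsto:
  assumes L: "liminf (\<lambda>n. ereal (min_moment \<beta> n)) = ereal L" and s: "s \<in> {1..Suc S}"
  shows "(\<lambda>N. min_value_envelope \<beta> N s) \<longlonglongrightarrow> (SUP N. min_value_envelope \<beta> N s)"
proof (rule LIMSEQ_incseq_SUP[OF _ incseq_min_value_envelope[OF s]])
  show "bdd_above (range (\<lambda>N. min_value_envelope \<beta> N s))"
  proof (cases "s = Suc S")
    case True
    then show ?thesis by (simp add: min_value_envelope_sink)
  next
    case False
    have "\<mu> s * min_value_envelope \<beta> N s \<le> (\<Sum>s\<in>{1..Suc S}. \<mu> s * min_value_envelope \<beta> N s)" for N
      using s by (intro member_le_sum) (auto intro!: mult_nonneg_nonneg mu_nonneg min_value_envelope_nonneg)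
    then have "\<mu> s * min_value_envelope \<beta> N s \<le> L" for N
      using weighted_min_value_envelope_le[OF L, of N] by (rule order_trans)
    then have "min_value_envelope \<beta> N s \<le> L / \<mu> s" for N
      using mu_pos[of s] False s by (simp add: field_simps)
    then show ?thesis by (rule bdd_aboveI2)
  qed
qed

text \<open>A greedy action survives the limit of an increasing family because actions are finite.\<close>

lemma greedy_action_of_limit:
  assumes s: "s \<in> {1..Suc S}"
    and mono: "\<And>s' N N'. s' \<in> {1..Suc S} \<Longrightarrow> N \<le> N' \<Longrightarrow> u N s' \<le> u N' s'"
    and lim: "\<And>s'. s' \<in> {1..Suc S} \<Longrightarrow> (\<lambda>N. u N s') \<longlonglongrightarrow> v s'"
    and bound: "\<And>N. bellman_min \<beta> (u N) s \<le> c"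
  shows "\<exists>a. (\<Sum>s'\<in>{1..Suc S}. tilt \<beta> s a s' * v s') \<le> c"
proof -
  have "\<exists>a. (\<Sum>s'\<in>{1..Suc S}. tilt \<beta> s a s' * u N s') \<le> c" for N
    using bellman_min_attained[of \<beta> "u N" s] bound[of N] by force
  then obtain a where a: "\<forall>N. \<exists>N'\<ge>N. (\<Sum>s'\<in>{1..Suc S}. tilt \<beta> s a s' * u N' s') \<le> c"
    using finite_frequently_choice[of "\<lambda>a N. (\<Sum>s'\<in>{1..Suc S}. tilt \<beta> s a s' * u N s') \<le> c"]
    by blast
  have "(\<Sum>s'\<in>{1..Suc S}. tilt \<beta> s a s' * u N s') \<le> c" for N
  proof -
    obtain N' where N': "N \<le> N'" "(\<Sum>s'\<in>{1..Suc S}. tilt \<beta> s a s' * u N' s') \<le> c"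
      using a by blast
    have "(\<Sum>s'\<in>{1..Suc S}. tilt \<beta> s a s' * u N s') \<le> (\<Sum>s'\<in>{1..Suc S}. tilt \<beta> s a s' * u N' s')"
      using tilt_nonneg[OF s] mono N'(1) by (intro sum_mono mult_left_mono) auto
    then show ?thesis using N'(2) by simp
  qed
  moreover have "(\<lambda>N. \<Sum>s'\<in>{1..Suc S}. tilt \<beta> s a s' * u N s') \<longlonglongrightarrow> (\<Sum>s'\<in>{1..Suc S}. tilt \<beta> s a s' * v s')"
    by (rule tendsto_sum) (rule tendsto_mult[OF tendsto_const lim], simp)
  ultimately show ?thesis by (intro exI LIMSEQ_le_const2) auto
qed

text \<open>The limit \<open>v\<close> of the lower envelope of value iteration is a supersolution of the
  Bellman equation.\<close>

lemma supersolution_exists: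
  assumes L: "liminf (\<lambda>n. ereal (min_moment \<beta> n)) = ereal L"
  obtains v d where "\<And>s. s \<in> {1..Suc S} \<Longrightarrow> 0 \<le> v s" "v (Suc S) = 1"
    "(\<Sum>s\<in>{1..Suc S}. \<mu> s * v s) \<le> L"
    "\<And>s. s \<in> {1..Suc S} \<Longrightarrow> (\<Sum>s'\<in>{1..Suc S}. tilt \<beta> s (d s) s' * v s') \<le> v s"
proof -
  define u where "u = min_value_envelope \<beta>"
  define v where "v s = (SUP N. u N s)" for s
  have uv: "(\<lambda>N. u N s) \<longlonglongrightarrow> v s" if "s \<in> {1..Suc S}" for s
    unfolding u_def v_def by (rule min_value_envelope_tendsto[OF L that])
  have u_mono: "u N s \<le> u N' s" if "s \<in> {1..Suc S}" "N \<le> N'" for s N N'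
    using incseq_min_value_envelope[OF that(1)] that(2) unfolding u_def incseq_def by blast
  have u_le_v: "u N s \<le> v s" if "s \<in> {1..Suc S}" for N s
    by (rule LIMSEQ_le_const[OF uv[OF that]]) (use u_mono[OF that] in blast)
  have "\<exists>a. (\<Sum>s'\<in>{1..Suc S}. tilt \<beta> s a s' * v s') \<le> v s" if s: "s \<in> {1..Suc S}" for s
  proof (rule greedy_action_of_limit[OF s u_mono uv])
    show "bellman_min \<beta> (u N) s \<le> v s" for N
      using bellman_min_envelope_le[OF s, of \<beta> N] u_le_v[OF s, of "Suc N"] unfolding u_def by simp
  qed
  then obtain d where "\<And>s. s \<in> {1..Suc S} \<Longrightarrow> (\<Sum>s'\<in>{1..Suc S}. tilt \<beta> s (d s) s' * v s') \<le> v s"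
    by metis
  moreover have "(\<Sum>s\<in>{1..Suc S}. \<mu> s * v s) \<le> L"
  proof (rule LIMSEQ_le_const2)
    show "(\<lambda>N. \<Sum>s\<in>{1..Suc S}. \<mu> s * u N s) \<longlonglongrightarrow> (\<Sum>s\<in>{1..Suc S}. \<mu> s * v s)"
      by (rule tendsto_sum) (rule tendsto_mult[OF tendsto_const uv], simp)
  qed (use weighted_min_value_envelope_le[OF L] in \<open>auto simp: u_def\<close>)
  moreover have "0 \<le> v s" if "s \<in> {1..Suc S}" for s
    using u_le_v[OF that, of 0] min_value_envelope_nonneg[OF that, of \<beta> 0] unfolding u_def by simp
  moreover have "v (Suc S) = 1" unfolding v_def u_def min_value_envelope_sink by simp
  ultimately show ?thesis using that by blast
qed

lemma sink_tilted_expect_le_supersolution: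
  assumes v: "\<And>s. s \<in> {1..Suc S} \<Longrightarrow> 0 \<le> v s" "v (Suc S) = 1"
    and d: "\<And>s. s \<in> {1..Suc S} \<Longrightarrow> (\<Sum>s'\<in>{1..Suc S}. tilt \<beta> s (d s) s' * v s') \<le> v s"
  shows "s \<in> {1..Suc S} \<Longrightarrow> tilted_expect \<beta> sink_ind n (sd_policy d) s \<le> v s"
proof (induction n arbitrary: s)
  case 0
  then show ?case using v by (auto simp: tilted_expect_0 sink_ind_def)
next
  case (Suc n)
  have "tilted_expect \<beta> sink_ind (Suc n) (sd_policy d) s =
      (\<Sum>s'\<in>{1..Suc S}. tilt \<beta> s (d s) s' * tilted_expect \<beta> sink_ind n (sd_policy d) s')"
    by (rule tilted_expect_Suc_sd_policy[OF Suc.prems])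
  also have "\<dots> \<le> (\<Sum>s'\<in>{1..Suc S}. tilt \<beta> s (d s) s' * v s')"
    using Suc.IH tilt_nonneg[OF Suc.prems] by (intro sum_mono mult_left_mono) auto
  also have "\<dots> \<le> v s" by (rule d[OF Suc.prems])
  finally show ?case .
qed

lemma exp_moment_sd_policy_eventually_less:
  assumes v: "\<And>s. s \<in> {1..Suc S} \<Longrightarrow> 0 \<le> v s" "v (Suc S) = 1"
    and d: "\<And>s. s \<in> {1..Suc S} \<Longrightarrow> (\<Sum>s'\<in>{1..Suc S}. tilt \<beta> s (d s) s' * v s') \<le> v s"
    and \<eta>: "0 < \<eta>"
  shows "eventually (\<lambda>n. exp_moment \<beta> n (sd_policy d) < (\<Sum>s\<in>{1..Suc S}. \<mu> s * v s) + \<eta>) sequentially"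
proof -
  have sink: "sink_mass \<beta> n (sd_policy d) \<le> (\<Sum>s\<in>{1..Suc S}. \<mu> s * v s)" for n
    unfolding sink_mass_def using mu_nonneg sink_tilted_expect_le_supersolution[OF v d]
    by (intro sum_mono mult_left_mono) auto
  then have "(\<lambda>n. transient_mass \<beta> n (sd_policy d)) \<longlonglongrightarrow> 0"
    by (intro transient_mass_tendsto_0 sd_policy_HR bdd_aboveI2)
  then have "eventually (\<lambda>n. transient_mass \<beta> n (sd_policy d) < \<eta>) sequentially"
    using \<eta> by (rule order_tendstoD(2))
  then show ?thesis
  proof eventually_elim
    case (elim n)
    then show ?case using sink[of n] by (simp add: exp_moment_split)
  qed
qed

lemma sd_policy_attains_finite_min_moment:
  assumes b: "0 < \<beta>" and L: "liminf (\<lambda>n. ereal (min_moment \<beta> n)) = ereal L"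
  shows "\<exists>d. limsup (\<lambda>t. ereal (- (1 / \<beta>) * ln (min_moment \<beta> (Suc t))))
    \<le> liminf (\<lambda>t. ereal (erm p S (sd_policy d) \<mu> (Suc t) \<beta> (ret r (Suc t))))"
proof -
  obtain v d where v: "\<And>s. s \<in> {1..Suc S} \<Longrightarrow> 0 \<le> v s" "v (Suc S) = 1"
      "(\<Sum>s\<in>{1..Suc S}. \<mu> s * v s) \<le> L"
    and d: "\<And>s. s \<in> {1..Suc S} \<Longrightarrow> (\<Sum>s'\<in>{1..Suc S}. tilt \<beta> s (d s) s' * v s') \<le> v s"
    using supersolution_exists[OF L] by blast
  define V where "V = (\<Sum>s\<in>{1..Suc S}. \<mu> s * v s)"
  obtain c where c: "0 < c" "\<And>\<pi> n. \<pi> \<in> HR_policies \<Longrightarrow> c \<le> exp_moment \<beta> n \<pi>"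
    using exp_moment_lower_bound[OF b] by blast
  have ev: "eventually (\<lambda>n. exp_moment \<beta> n (sd_policy d) < V + \<eta>) sequentially" if "0 < \<eta>" for \<eta>
    unfolding V_def by (rule exp_moment_sd_policy_eventually_less[OF v(1,2) d that])
  have "c \<le> V"
  proof (rule ccontr)
    assume "\<not> c \<le> V"
    then obtain n where "exp_moment \<beta> n (sd_policy d) < c"
      using ev[of "c - V"] by (auto simp: eventually_sequentially)
    then show False using c(2)[OF sd_policy_HR[of d], of n] by simp
  qed
  then have V: "0 < V" "V \<le> L" using c(1) v(3) unfolding V_def by auto
  have "limsup (\<lambda>t. ereal (- (1 / \<beta>) * ln (min_moment \<beta> (Suc t)))) \<le> ereal (- (1 / \<beta>) * ln L)"
    using V L by (intro limsup_neg_ln_le[OF b min_moment_pos]) auto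
  also have "\<dots> \<le> ereal (- (1 / \<beta>) * ln V)"
    using V b by (simp add: divide_right_mono)
  also have "\<dots> \<le> liminf (\<lambda>t. ereal (- (1 / \<beta>) * ln (exp_moment \<beta> (Suc t) (sd_policy d))))"
    using c sd_policy_HR by (intro liminf_neg_ln_ge[OF b _ V(1) ev]) (auto intro: order_less_le_trans)
  finally show ?thesis using b by (auto simp: erm_eq_exp_moment)
qed

lemma limsup_neg_ln_min_moment_infinite:
  assumes b: "0 < \<beta>" and inf: "liminf (\<lambda>n. ereal (min_moment \<beta> n)) = \<infinity>"
  shows "limsup (\<lambda>t. ereal (- (1 / \<beta>) * ln (min_moment \<beta> (Suc t)))) = - \<infinity>"
proof -
  have "limsup (\<lambda>t. ereal (- (1 / \<beta>) * ln (min_moment \<beta> (Suc t)))) \<le> ereal z" for z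
  proof -
    have "limsup (\<lambda>t. ereal (- (1 / \<beta>) * ln (min_moment \<beta> (Suc t)))) \<le>
        ereal (- (1 / \<beta>) * ln (exp (- \<beta> * z)))"
      by (rule limsup_neg_ln_le[OF b min_moment_pos exp_gt_zero]) (simp add: inf)
    then show ?thesis using b by simp
  qed
  then show ?thesis by (rule ereal_bot)
qed

lemma sd_policy_attains_min_moment:
  assumes b: "0 < \<beta>"
  shows "\<exists>d. limsup (\<lambda>t. ereal (- (1 / \<beta>) * ln (min_moment \<beta> (Suc t))))
    \<le> liminf (\<lambda>t. ereal (erm p S (sd_policy d) \<mu> (Suc t) \<beta> (ret r (Suc t))))"
proof (cases "liminf (\<lambda>n. ereal (min_moment \<beta> n))")
  case (real L)
  then show ?thesis by (rule sd_policy_attains_finite_min_moment[OF b])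
next
  case PInf
  then show ?thesis using limsup_neg_ln_min_moment_infinite[OF b] by simp
next
  case MInf
  moreover have "0 \<le> liminf (\<lambda>n. ereal (min_moment \<beta> n))"
    using min_moment_pos by (intro Liminf_bounded always_eventually) (auto intro: less_imp_le)
  ultimately show ?thesis by simp
qed

section \<open>The main inequality\<close>

lemma g_t_zero: "g_t p r S \<mu> \<pi> 0 t = mean_return (Suc t) \<pi>"
  unfolding g_t_def erm_def mean_return_def by simp

lemma g_t_antimono:
  "\<pi> \<in> HR_policies \<Longrightarrow> 0 \<le> \<beta> \<Longrightarrow> \<beta> \<le> \<beta>' \<Longrightarrow> g_t p r S \<mu> \<pi> \<beta>' t \<le> g_t p r S \<mu> \<pi> \<beta> t"
  unfolding g_t_def by (rule erm_antimono)

lemma g_t_zero_tendsto: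
  assumes "\<pi> \<in> HR_policies"
  obtains G0 where "(\<lambda>t. g_t p r S \<mu> \<pi> 0 t) \<longlonglongrightarrow> G0"
  using mean_return_convergent[OF assms] unfolding g_t_zero convergent_def
  by (auto dest: LIMSEQ_Suc)

lemma g_t_zero_le_gstar_t:
  assumes "\<pi> \<in> HR_policies"
  shows "g_t p r S \<mu> \<pi> 0 t \<le> gstar_t p r S \<mu> 0 t"
proof -
  obtain B where "\<forall>\<pi>\<in>HR_policies. \<forall>n. \<bar>mean_return n \<pi>\<bar> \<le> B"
    using mean_return_bounded by blast
  then show ?thesis
    unfolding gstar_t_def using assms
    by (intro cSup_upper bdd_aboveI2[of _ _ B]) (auto simp: g_t_zero abs_le_iff)
qed

lemma g_t_le_min_moment:
  assumes "\<pi> \<in> HR_policies" "0 < \<beta>"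
  shows "g_t p r S \<mu> \<pi> \<beta> t \<le> - (1 / \<beta>) * ln (min_moment \<beta> (Suc t))"
proof -
  have "ln (min_moment \<beta> (Suc t)) \<le> ln (exp_moment \<beta> (Suc t) \<pi>)"
    using min_moment_pos[of \<beta> "Suc t"] min_moment_le_exp_moment[OF assms(1), of \<beta> "Suc t"]
    by (subst ln_le_cancel_iff) auto
  then show ?thesis
    unfolding g_t_def erm_eq_exp_moment[OF assms(2)] using assms(2) by (intro mult_left_mono_neg) auto
qed

lemma sd_policy_dominates:
  assumes b: "0 < \<beta>"
  obtains d where "\<And>\<pi>. \<pi> \<in> HR_policies \<Longrightarrow>
      limsup (\<lambda>t. ereal (g_t p r S \<mu> \<pi> \<beta> t)) \<le> g_inf p r S \<mu> (sd_policy d) \<beta>"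
    and "gstar_inf p r S \<mu> \<beta> \<le> g_inf p r S \<mu> (sd_policy d) \<beta>"
proof -
  define opt where "opt t = ereal (- (1 / \<beta>) * ln (min_moment \<beta> (Suc t)))" for t
  obtain d where d: "limsup opt \<le> g_inf p r S \<mu> (sd_policy d) \<beta>"
    using sd_policy_attains_min_moment[OF b] unfolding g_inf_def g_t_def opt_def by blast
  show ?thesis
  proof
    fix \<pi> :: "'a policy"
    assume "\<pi> \<in> HR_policies"
    then have "limsup (\<lambda>t. ereal (g_t p r S \<mu> \<pi> \<beta> t)) \<le> limsup opt"
      unfolding opt_def using g_t_le_min_moment b by (intro Limsup_mono always_eventually) auto
    then show "limsup (\<lambda>t. ereal (g_t p r S \<mu> \<pi> \<beta> t)) \<le> g_inf p r S \<mu> (sd_policy d) \<beta>"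
      using d by (rule order_trans)
  next
    have "gstar_t p r S \<mu> \<beta> t \<le> - (1 / \<beta>) * ln (min_moment \<beta> (Suc t))" for t
      unfolding gstar_t_def using g_t_le_min_moment[OF _ b] sd_policy_HR by (intro cSup_least) auto
    then have "gstar_inf p r S \<mu> \<beta> \<le> liminf opt"
      unfolding gstar_inf_def opt_def by (intro Liminf_mono always_eventually) auto
    also have "\<dots> \<le> limsup opt" by (rule Liminf_le_Limsup) simp
    finally show "gstar_inf p r S \<mu> \<beta> \<le> g_inf p r S \<mu> (sd_policy d) \<beta>" using d by (rule order_trans)
  qed
qed

lemma Sup_h_t_convergent:
  assumes \<pi>: "\<pi> \<in> HR_policies" and a: "0 < \<alpha>" "\<alpha> < 1"
  shows "convergent (\<lambda>t. ereal (Sup ((\<lambda>\<beta>. h_t p r S \<mu> \<alpha> \<pi> \<beta> t) ` {0<..})))"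
proof -
  obtain G0 where "(\<lambda>t. g_t p r S \<mu> \<pi> 0 t) \<longlonglongrightarrow> G0" by (rule g_t_zero_tendsto[OF \<pi>])
  then show ?thesis
    unfolding h_t_def using erm_convergent[OF \<pi>] g_t_antimono[OF \<pi>]
    by (intro convergent_Sup_entropic[OF a]) (auto simp: g_t_def convergent_def)
qed

lemma h_inf_le_lim_evar:
  assumes a: "0 < \<alpha>" "\<alpha> < 1" and b: "0 < \<beta>"
  shows "h_inf p r S \<mu> \<alpha> (sd_policy d) \<beta> \<le>
    lim (\<lambda>t. ereal (evar p S (sd_policy d) \<mu> (Suc t) \<alpha> (ret r (Suc t))))"
proof -
  define E where "E t = ereal (evar p S (sd_policy d) \<mu> (Suc t) \<alpha> (ret r (Suc t)))" for t
  have E: "E = (\<lambda>t. ereal (Sup ((\<lambda>\<beta>. h_t p r S \<mu> \<alpha> (sd_policy d) \<beta> t) ` {0<..})))"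
    unfolding E_def evar_def h_t_def g_t_def ..
  have E_ge: "ereal (g_t p r S \<mu> (sd_policy d) \<beta> t) + ereal (ln \<alpha> / \<beta>) \<le> E t" for t
  proof -
    have "h_t p r S \<mu> \<alpha> (sd_policy d) \<beta>' t \<le> g_t p r S \<mu> (sd_policy d) 0 t"
      if "0 < \<beta>'" for \<beta>'
    proof -
      have "ln \<alpha> / \<beta>' < 0" using a that by (simp add: divide_neg_pos)
      then show ?thesis
        using g_t_antimono[OF sd_policy_HR[of d], of 0 \<beta>' t] that unfolding h_t_def by linarith
    qed
    then have "h_t p r S \<mu> \<alpha> (sd_policy d) \<beta> t \<le> Sup ((\<lambda>\<beta>. h_t p r S \<mu> \<alpha> (sd_policy d) \<beta> t) ` {0<..})"
      using b by (intro cSup_upper bdd_aboveI2) auto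
    then show ?thesis unfolding E by (simp add: h_t_def)
  qed
  have "h_inf p r S \<mu> \<alpha> (sd_policy d) \<beta> =
      liminf (\<lambda>t. ereal (g_t p r S \<mu> (sd_policy d) \<beta> t) + ereal (ln \<alpha> / \<beta>))"
    unfolding h_inf_def g_inf_def by (rule Liminf_add_ereal_right[symmetric]) auto
  also have "\<dots> \<le> liminf E"
    using E_ge by (intro Liminf_mono always_eventually) auto
  also have "\<dots> = lim E"
    using Sup_h_t_convergent[OF sd_policy_HR a] unfolding E
    by (simp add: convergent_LIMSEQ_iff lim_imp_Liminf)
  finally show ?thesis unfolding E_def .
qed

lemma limsup_g_t_le_h_inf:
  assumes \<pi>: "\<pi> \<in> HR_policies" and b: "0 < \<beta>"
    and H: "\<And>d. h_inf p r S \<mu> \<alpha> (sd_policy d) \<beta> \<le> H"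
  shows "limsup (\<lambda>t. ereal (g_t p r S \<mu> \<pi> \<beta> t)) + ereal (ln \<alpha> / \<beta>) \<le> H"
proof -
  obtain d where "\<And>\<pi>. \<pi> \<in> HR_policies \<Longrightarrow>
      limsup (\<lambda>t. ereal (g_t p r S \<mu> \<pi> \<beta> t)) \<le> g_inf p r S \<mu> (sd_policy d) \<beta>"
    using sd_policy_dominates[OF b] by blast
  then have "limsup (\<lambda>t. ereal (g_t p r S \<mu> \<pi> \<beta> t)) + ereal (ln \<alpha> / \<beta>) \<le>
      h_inf p r S \<mu> \<alpha> (sd_policy d) \<beta>"
    unfolding h_inf_def using \<pi> by (intro add_right_mono)
  then show ?thesis using H by (rule order_trans)
qed

lemma limsup_g_t_zero_le:
  assumes \<pi>: "\<pi> \<in> HR_policies" and b0: "0 < \<beta>0"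
    and gap: "gstar_inf p r S \<mu> 0 - gstar_inf p r S \<mu> \<beta>0 \<le> ereal \<delta>"
    and H: "\<And>d. h_inf p r S \<mu> \<alpha> (sd_policy d) \<beta>0 \<le> H"
  shows "limsup (\<lambda>t. ereal (g_t p r S \<mu> \<pi> 0 t)) + ereal (ln \<alpha> / \<beta>0) \<le> H + ereal \<delta>"
proof -
  obtain G0 where G0: "(\<lambda>t. g_t p r S \<mu> \<pi> 0 t) \<longlonglongrightarrow> G0" by (rule g_t_zero_tendsto[OF \<pi>])
  obtain d where d: "gstar_inf p r S \<mu> \<beta>0 \<le> g_inf p r S \<mu> (sd_policy d) \<beta>0"
    using sd_policy_dominates[OF b0] by blast
  have "limsup (\<lambda>t. ereal (g_t p r S \<mu> \<pi> 0 t)) = liminf (\<lambda>t. ereal (g_t p r S \<mu> \<pi> 0 t))"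
    using lim_imp_Limsup[OF _ G0[THEN tendsto_ereal]] lim_imp_Liminf[OF _ G0[THEN tendsto_ereal]]
    by simp
  also have "\<dots> \<le> gstar_inf p r S \<mu> 0"
    unfolding gstar_inf_def using g_t_zero_le_gstar_t[OF \<pi>] by (intro Liminf_mono) auto
  also have "\<dots> \<le> gstar_inf p r S \<mu> \<beta>0 + ereal \<delta>"
    using gap by (cases "gstar_inf p r S \<mu> 0"; cases "gstar_inf p r S \<mu> \<beta>0") auto
  also have "\<dots> \<le> g_inf p r S \<mu> (sd_policy d) \<beta>0 + ereal \<delta>"
    using d by (rule add_right_mono)
  finally have "limsup (\<lambda>t. ereal (g_t p r S \<mu> \<pi> 0 t)) + ereal (ln \<alpha> / \<beta>0) \<le>
      (g_inf p r S \<mu> (sd_policy d) \<beta>0 + ereal \<delta>) + ereal (ln \<alpha> / \<beta>0)"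
    by (rule add_right_mono)
  also have "\<dots> = h_inf p r S \<mu> \<alpha> (sd_policy d) \<beta>0 + ereal \<delta>"
    unfolding h_inf_def by (simp only: ac_simps)
  also have "\<dots> \<le> H + ereal \<delta>"
    using H by (rule add_right_mono)
  finally show ?thesis .
qed

lemma lim_Sup_h_t_le:
  fixes dstar :: "nat \<Rightarrow> 'a"
  assumes a: "0 < \<alpha>" "\<alpha> < 1" and d: "0 < \<delta>" and b0: "0 < \<beta>0" "\<beta>0 < - ln \<alpha> / \<delta>"
    and gap: "gstar_inf p r S \<mu> 0 - gstar_inf p r S \<mu> \<beta>0 \<le> ereal \<delta>"
    and max: "\<And>d \<beta>. \<beta> \<in> beta_grid \<alpha> \<beta>0 \<delta> \<Longrightarrow>
      h_inf p r S \<mu> \<alpha> (sd_policy d) \<beta> \<le> h_inf p r S \<mu> \<alpha> (sd_policy dstar) \<beta>star"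
    and \<pi>: "\<pi> \<in> HR_policies"
  shows "lim (\<lambda>t. ereal (Sup ((\<lambda>\<beta>. h_t p r S \<mu> \<alpha> \<pi> \<beta> t) ` {0<..}))) \<le>
    h_inf p r S \<mu> \<alpha> (sd_policy dstar) \<beta>star + ereal \<delta>"
proof -
  let ?H = "h_inf p r S \<mu> \<alpha> (sd_policy dstar) \<beta>star"
  have "limsup (\<lambda>t. ereal (Sup ((\<lambda>\<beta>. g_t p r S \<mu> \<pi> \<beta> t + ln \<alpha> / \<beta>) ` {0<..}))) \<le> ?H + ereal \<delta>"
  proof (rule limsup_Sup_entropic_le[OF a d b0 g_t_antimono[OF \<pi>]])
    fix \<gamma>
    assume \<gamma>: "\<gamma> \<in> beta_grid \<alpha> \<beta>0 \<delta>"
    have "limsup (\<lambda>t. ereal (g_t p r S \<mu> \<pi> \<gamma> t)) + ereal (ln \<alpha> / \<gamma>) \<le> ?H"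
      using limsup_g_t_le_h_inf[OF \<pi> beta_grid_pos[OF a d \<gamma>] max[OF \<gamma>]] .
    then show "limsup (\<lambda>t. ereal (g_t p r S \<mu> \<pi> \<gamma> t)) + ereal (ln \<alpha> / \<gamma> + \<delta>) \<le> ?H + ereal \<delta>"
      unfolding plus_ereal.simps(1)[symmetric] add.assoc[symmetric] by (rule add_right_mono)
  qed (simp_all add: limsup_g_t_zero_le[OF \<pi> b0(1) gap max[OF beta_grid_base[OF b0]]])
  then show ?thesis
    using Sup_h_t_convergent[OF \<pi> a] unfolding h_t_def
    by (simp add: convergent_LIMSEQ_iff lim_imp_Limsup)
qed

end

theorem theorem3:
  fixes p :: "nat \<Rightarrow> 'a::finite \<Rightarrow> nat \<Rightarrow> real"
    and r :: "nat \<Rightarrow> 'a \<Rightarrow> nat \<Rightarrow> real"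
    and \<mu> :: "nat \<Rightarrow> real"
    and S :: nat
    and \<alpha> \<delta> \<beta>0 \<beta>star :: real
    and dstar :: "nat \<Rightarrow> 'a"
  assumes alpha: "0 < \<alpha>" "\<alpha> < 1"
    and p_nonneg: "\<forall>s\<in>{1..Suc S}. \<forall>a. \<forall>s'\<in>{1..Suc S}. 0 \<le> p s a s'"
    and p_sum: "\<forall>s\<in>{1..Suc S}. \<forall>a. (\<Sum>s'\<in>{1..Suc S}. p s a s') = 1"
    and sink_p: "\<forall>a. p (Suc S) a (Suc S) = 1"
    and sink_r: "\<forall>a. r (Suc S) a (Suc S) = 0"
    and mu_pos: "\<forall>s\<in>{1..S}. 0 < \<mu> s"
    and mu_sink: "\<mu> (Suc S) = 0"
    and mu_sum: "(\<Sum>s\<in>{1..S}. \<mu> s) = 1"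
    and trans: "transient p S"
    and delta: "0 < \<delta>"
    and beta0: "0 < \<beta>0" "\<beta>0 < - ln \<alpha> / \<delta>"
    and gap: "gstar_inf p r S \<mu> 0 - gstar_inf p r S \<mu> \<beta>0 \<le> ereal \<delta>"
    and star_grid: "\<beta>star \<in> beta_grid \<alpha> \<beta>0 \<delta>"
    and star_max: "\<forall>d::nat \<Rightarrow> 'a. \<forall>\<beta>\<in>beta_grid \<alpha> \<beta>0 \<delta>.
                      h_inf p r S \<mu> \<alpha> (sd_policy d) \<beta> \<le> h_inf p r S \<mu> \<alpha> (sd_policy dstar) \<beta>star"
  shows "convergent (\<lambda>t. ereal (evar p S (sd_policy dstar) \<mu> (Suc t) \<alpha> (ret r (Suc t))))
       \<and> (\<forall>\<pi>\<in>HR_policies.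
            convergent (\<lambda>t. ereal (Sup ((\<lambda>\<beta>. h_t p r S \<mu> \<alpha> \<pi> \<beta> t) ` {0<..}))))
       \<and> lim (\<lambda>t. ereal (evar p S (sd_policy dstar) \<mu> (Suc t) \<alpha> (ret r (Suc t))))
           \<ge> (SUP \<pi>\<in>HR_policies.
                 lim (\<lambda>t. ereal (Sup ((\<lambda>\<beta>. h_t p r S \<mu> \<alpha> \<pi> \<beta> t) ` {0<..}))))
             - ereal \<delta>"
proof -
  interpret transient_mdp_init p r S \<mu>
  proof
    show "0 \<le> \<mu> s" if "s \<in> {1..Suc S}" for s
      using that mu_pos mu_sink by (cases "s = Suc S") (auto simp: less_imp_le)
  qed (use assms in \<open>auto simp: sum.cl_ivl_Suc\<close>)
  let ?H = "h_inf p r S \<mu> \<alpha> (sd_policy dstar) \<beta>star"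
  have evar_eq: "(\<lambda>t. ereal (evar p S (sd_policy dstar) \<mu> (Suc t) \<alpha> (ret r (Suc t)))) =
      (\<lambda>t. ereal (Sup ((\<lambda>\<beta>. h_t p r S \<mu> \<alpha> (sd_policy dstar) \<beta> t) ` {0<..})))"
    unfolding evar_def h_t_def g_t_def ..
  let ?V = "SUP \<pi>\<in>HR_policies. lim (\<lambda>t. ereal (Sup ((\<lambda>\<beta>. h_t p r S \<mu> \<alpha> \<pi> \<beta> t) ` {0<..})))"
  have "?V \<le> ?H + ereal \<delta>"
    using lim_Sup_h_t_le[OF alpha delta beta0 gap] star_max by (intro SUP_least) blast
  then have "?V - ereal \<delta> \<le> ?H"
    by (cases ?V; cases ?H) auto
  also have "?H \<le> lim (\<lambda>t. ereal (evar p S (sd_policy dstar) \<mu> (Suc t) \<alpha> (ret r (Suc t))))"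
    by (rule h_inf_le_lim_evar[OF alpha beta_grid_pos[OF alpha delta star_grid]])
  finally show ?thesis
    using Sup_h_t_convergent[OF _ alpha] sd_policy_HR unfolding evar_eq by auto
qed

end
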